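(* For $n\geq 0$ let $m_n$ and $i_n$ denote the numbers of isomorphism classes of matroids and of irreducible matroids, respectively, on an $n$-element set, and for $r,k\geq 0$ let $m_{r,k}$ and $i_{r,k}$ denote the numbers of isomorphism classes of matroids and of irreducible matroids of rank $r$ and nullity $k$. Let $M(t)=\sum_{n\geq 0}m_nt^n$, $I(t)=\sum_{n\geq0}i_nt^n$, $M(x,y)=\sum_{r,k\geq 0}m_{r,k}x^ry^k$, $I(x,y)=\sum_{r,k\geq0}i_{r,k}x^ry^k$ as formal power series. Then $$M(t)=\frac{1}{1-I(t)}\qquad\text{and}\qquad M(x,y)=\frac{1}{1-I(x,y)}.$$
   Context: For a matroid $M$ on $S$ write $\rho_M$ for rank, $\rho(M)=\rho_M(S)$, $\nu_M(A)=|A|-\rho_M(A)$, $\lambda_M(A)=\rho(M)-\rho_M(A)$. For matroids $M$ on $S$ and $N$ on $T$ with $S\cap T=\emptyset$, the free product $M\mathbin{\Box} N$ is the matroid on $S\cup T$ whose independent sets are those $A$ with $A\cap S$ independent in $M$ and $\lambda_M(A\cap S)\geq\nu_N(A\cap T)$; it is associative. A matroid is irreducible if it is nonempty and every factorization of it as a free product contains it as a factor; the empty matroid is not irreducible (it is counted in $m_0=1$, $m_{0,0}=1$). *)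

theory Defs
  imports "HOL-Computational_Algebra.Formal_Power_Series"
begin

definition matroid :: "'a set \<Rightarrow> 'a set set \<Rightarrow> bool" where
  "matroid E \<I> \<longleftrightarrow> finite E \<and> {} \<in> \<I> \<and> (\<forall>X\<in>\<I>. X \<subseteq> E)
     \<and> (\<forall>X Y. Y \<in> \<I> \<and> X \<subseteq> Y \<longrightarrow> X \<in> \<I>)
     \<and> (\<forall>X Y. X \<in> \<I> \<and> Y \<in> \<I> \<and> card X < card Y \<longrightarrow> (\<exists>y\<in>Y - X. insert y X \<in> \<I>))"

definition mrank :: "'a set set \<Rightarrow> 'a set \<Rightarrow> nat" where
  "mrank \<I> A = Max (card ` {Y \<in> \<I>. Y \<subseteq> A})"

definition mlambda :: "'a set \<Rightarrow> 'a set set \<Rightarrow> 'a set \<Rightarrow> int" where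
  "mlambda E \<I> A = int (mrank \<I> E) - int (mrank \<I> A)"

definition mnu :: "'a set set \<Rightarrow> 'a set \<Rightarrow> int" where
  "mnu \<I> A = int (card A) - int (mrank \<I> A)"

definition free_product :: "'a set \<Rightarrow> 'a set set \<Rightarrow> 'a set \<Rightarrow> 'a set set \<Rightarrow> 'a set set" where
  "free_product S IS T IT =
     {A. A \<subseteq> S \<union> T \<and> A \<inter> S \<in> IS \<and> mlambda S IS (A \<inter> S) \<ge> mnu IT (A \<inter> T)}"

text \<open>Irreducible: nonempty, and every factorization M = N1 \<box> N2 has M as a factor.
  (By associativity, k-fold factorizations reduce to binary ones.)\<close>
definition irreducible_matroid :: "'a set \<Rightarrow> 'a set set \<Rightarrow> bool" where
  "irreducible_matroid E \<I> \<longleftrightarrow> matroid E \<I> \<and> E \<noteq> {} \<and>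
     (\<forall>S IS T IT. matroid S IS \<and> matroid T IT \<and> S \<inter> T = {} \<and> S \<union> T = E
        \<and> free_product S IS T IT = \<I> \<longrightarrow> (S, IS) = (E, \<I>) \<or> (T, IT) = (E, \<I>))"

definition matroid_iso :: "('a set \<times> 'a set set) \<Rightarrow> ('b set \<times> 'b set set) \<Rightarrow> bool" where
  "matroid_iso M N \<longleftrightarrow> (\<exists>f. bij_betw f (fst M) (fst N) \<and>
      (\<forall>X. X \<subseteq> fst M \<longrightarrow> (X \<in> snd M \<longleftrightarrow> f ` X \<in> snd N)))"

definition iso_rel :: "((nat set \<times> nat set set) \<times> (nat set \<times> nat set set)) set" where
  "iso_rel = {(M, N). matroid_iso M N}"

definition num_classes :: "nat \<Rightarrow> (nat set \<Rightarrow> nat set set \<Rightarrow> bool) \<Rightarrow> nat" where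
  "num_classes n P = card ({(E, \<I>). E = {0..<n} \<and> matroid E \<I> \<and> P E \<I>} // iso_rel)"

definition m_count :: "nat \<Rightarrow> nat" where
  "m_count n = num_classes n (\<lambda>_ _. True)"

definition i_count :: "nat \<Rightarrow> nat" where
  "i_count n = num_classes n irreducible_matroid"

definition m_count2 :: "nat \<Rightarrow> nat \<Rightarrow> nat" where
  "m_count2 r k = num_classes (r + k) (\<lambda>E \<I>. mrank \<I> E = r)"

definition i_count2 :: "nat \<Rightarrow> nat \<Rightarrow> nat" where
  "i_count2 r k = num_classes (r + k) (\<lambda>E \<I>. irreducible_matroid E \<I> \<and> mrank \<I> E = r)"

text \<open>Bivariate series in x, y as x-series with coefficients y-series.\<close>
definition biv :: "(nat \<Rightarrow> nat \<Rightarrow> nat) \<Rightarrow> rat fps fps" where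
  "biv c = Abs_fps (\<lambda>r. Abs_fps (\<lambda>k. of_nat (c r k)))"

end

(*
  Call S \<subseteq> E a separator of M if M = M|S \<box> M/S. Irreducible matroids are the nonempty
  ones whose only separators are {} and E. Separators are closed under unions, and a separator
  of M|S inside a separator S of M is a separator of M; hence a nonempty separator of least size
  has an irreducible restriction, and every nonempty matroid factors as I \<box> N with I irreducible.

  This first factor is unique up to isomorphism. Two different separators S, S' with irreducible
  restrictions are disjoint, and then they are complementary separators of M|(S \<union> S'). That
  forces M|(S \<union> S') to be uniform, so S and S' are singletons, and swapping their elements
  is an automorphism of M.

  Hence isomorphism classes of nonempty matroids on n elements correspond to triples (k, [I], [N])
  with I irreducible on k elements and N arbitrary on n - k elements, ranks and nullities adding
  up. This gives m_n = \<Sum>k=1..n. i_k m_(n-k) and the analogous bivariate recurrence, that is,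
  (1 - I) M = 1.
*)

theory Submission
  imports Defs "HOL-Combinatorics.Transposition"
begin

section \<open>Independence and rank\<close>

lemma matroidD:
  assumes "matroid E I"
  shows "finite E" "{} \<in> I" "\<And>X. X \<in> I \<Longrightarrow> X \<subseteq> E"
    "\<And>X Y. Y \<in> I \<Longrightarrow> X \<subseteq> Y \<Longrightarrow> X \<in> I"
    "\<And>X Y. X \<in> I \<Longrightarrow> Y \<in> I \<Longrightarrow> card X < card Y \<Longrightarrow> \<exists>y\<in>Y - X. insert y X \<in> I"
  using assms unfolding matroid_def by blast+

lemma matroid_empty_ground_iff: "matroid {} I \<longleftrightarrow> I = {{}}"
  unfolding matroid_def by auto

context
  fixes E I
  assumes M: "matroid E I"
begin

lemma finite_ground: "finite E"
  using matroidD[OF M] by blast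

lemma empty_indep: "{} \<in> I"
  using matroidD[OF M] by blast

lemma indep_subset_ground: "X \<in> I \<Longrightarrow> X \<subseteq> E"
  using matroidD[OF M] by blast

lemma indep_subset: "Y \<in> I \<Longrightarrow> X \<subseteq> Y \<Longrightarrow> X \<in> I"
  using matroidD[OF M] by blast

lemma indep_augment: "X \<in> I \<Longrightarrow> Y \<in> I \<Longrightarrow> card X < card Y \<Longrightarrow> \<exists>y\<in>Y - X. insert y X \<in> I"
  using matroidD[OF M] by blast

lemma finite_subset_ground: "X \<subseteq> E \<Longrightarrow> finite X"
  using finite_ground finite_subset by blast

lemma indep_finite: "X \<in> I \<Longrightarrow> finite X"
  using indep_subset_ground finite_subset_ground by blast

lemma rank_witness: "\<exists>Y. Y \<in> I \<and> Y \<subseteq> A \<and> card Y = mrank I A"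
proof -
  have "{Y \<in> I. Y \<subseteq> A} \<subseteq> Pow E"
    using indep_subset_ground by blast
  then have "finite (card ` {Y \<in> I. Y \<subseteq> A})"
    using finite_ground finite_subset by blast
  moreover have "card ` {Y \<in> I. Y \<subseteq> A} \<noteq> {}"
    using empty_indep by blast
  ultimately have "mrank I A \<in> card ` {Y \<in> I. Y \<subseteq> A}"
    unfolding mrank_def by (rule Max_in)
  then show ?thesis by force
qed

lemma card_le_rank: "Y \<in> I \<Longrightarrow> Y \<subseteq> A \<Longrightarrow> card Y \<le> mrank I A"
proof -
  have "{Y \<in> I. Y \<subseteq> A} \<subseteq> Pow E"
    using indep_subset_ground by blast
  then have "finite (card ` {Y \<in> I. Y \<subseteq> A})"
    using finite_ground finite_subset by blast
  then show "Y \<in> I \<Longrightarrow> Y \<subseteq> A \<Longrightarrow> card Y \<le> mrank I A"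
    unfolding mrank_def by (auto intro: Max_ge)
qed

lemma indep_extend_to_rank:
  "X \<in> I \<Longrightarrow> X \<subseteq> A \<Longrightarrow> \<exists>Y. X \<subseteq> Y \<and> Y \<subseteq> A \<and> Y \<in> I \<and> card Y = mrank I A"
proof (induction "mrank I A - card X" arbitrary: X rule: less_induct)
  case less
  show ?case
  proof (cases "card X < mrank I A")
    case False
    then have "card X = mrank I A"
      using less.prems card_le_rank[of X A] by simp
    then show ?thesis
      using less.prems by blast
  next
    case True
    obtain Z where Z: "Z \<in> I" "Z \<subseteq> A" "card Z = mrank I A"
      using rank_witness by blast
    obtain z where z: "z \<in> Z - X" "insert z X \<in> I"
      using indep_augment[OF less.prems(1) Z(1)] True Z(3) by auto
    have "card (insert z X) = Suc (card X)"
      using z indep_finite[OF less.prems(1)] by simp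
    then have smaller: "mrank I A - card (insert z X) < mrank I A - card X"
      using True by simp
    have "insert z X \<subseteq> A"
      using z Z(2) less.prems(2) by blast
    then show ?thesis
      using less.hyps[OF smaller z(2)] by blast
  qed
qed

lemma rank_mono: "A \<subseteq> B \<Longrightarrow> mrank I A \<le> mrank I B"
proof -
  assume "A \<subseteq> B"
  obtain Y where "Y \<in> I" "Y \<subseteq> A" "card Y = mrank I A"
    using rank_witness by blast
  then show ?thesis
    using card_le_rank[of Y B] \<open>A \<subseteq> B\<close> by simp
qed

lemma rank_le_card: "finite A \<Longrightarrow> mrank I A \<le> card A"
proof -
  assume "finite A"
  obtain Y where "Y \<in> I" "Y \<subseteq> A" "card Y = mrank I A"
    using rank_witness by blast
  then show ?thesis
    using card_mono[OF \<open>finite A\<close>] by metis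
qed

lemma rank_le_rank_ground: "mrank I A \<le> mrank I E"
proof -
  obtain Y where "Y \<in> I" "Y \<subseteq> A" "card Y = mrank I A"
    using rank_witness by blast
  then show ?thesis
    using card_le_rank[of Y E] indep_subset_ground by simp
qed

lemma rank_indep: "X \<in> I \<Longrightarrow> mrank I X = card X"
  using card_le_rank[of X X] rank_le_card[of X] indep_finite by (meson dual_order.antisym order_refl)

lemma rank_empty: "mrank I {} = 0"
  using rank_indep[OF empty_indep] by simp

lemma indep_iff_rank: "X \<subseteq> E \<Longrightarrow> X \<in> I \<longleftrightarrow> mrank I X = card X"
proof
  assume X: "X \<subseteq> E" "mrank I X = card X"
  obtain Y where Y: "Y \<in> I" "Y \<subseteq> X" "card Y = mrank I X"
    using rank_witness by blast
  then have "Y = X"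
    using X card_subset_eq finite_subset_ground by metis
  then show "X \<in> I"
    using Y by simp
qed (use rank_indep in auto)

lemma rank_Un_le: "finite B \<Longrightarrow> mrank I (A \<union> B) \<le> mrank I A + card B"
proof -
  assume fB: "finite B"
  obtain Y where Y: "Y \<in> I" "Y \<subseteq> A \<union> B" "card Y = mrank I (A \<union> B)"
    using rank_witness by blast
  have "Y = (Y \<inter> A) \<union> (Y \<inter> B)"
    using Y(2) by blast
  then have "card Y \<le> card (Y \<inter> A) + card (Y \<inter> B)"
    by (metis card_Un_le)
  moreover have "card (Y \<inter> A) \<le> mrank I A"
    using card_le_rank indep_subset[OF Y(1)] by blast
  moreover have "card (Y \<inter> B) \<le> card B"
    using fB by (simp add: card_mono)
  ultimately show ?thesis
    using Y(3) by linarith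
qed

lemma nullity_mono:
  assumes "Y' \<subseteq> Y" "finite Y"
  shows "card Y' + mrank I Y \<le> card Y + mrank I Y'"
proof -
  have "mrank I Y \<le> mrank I Y' + card (Y - Y')"
    using rank_Un_le[of "Y - Y'" Y'] assms by (simp add: Un_absorb1)
  moreover have "card Y = card Y' + card (Y - Y')"
    using assms card_Diff_subset[of Y' Y] card_mono[of Y Y'] finite_subset by fastforce
  ultimately show ?thesis
    by linarith
qed

lemma rank_submodular: "mrank I (A \<union> B) + mrank I (A \<inter> B) \<le> mrank I A + mrank I B"
proof -
  obtain Z where Z: "Z \<in> I" "Z \<subseteq> A \<inter> B" "card Z = mrank I (A \<inter> B)"
    using rank_witness by blast
  obtain Y where Y: "Z \<subseteq> Y" "Y \<subseteq> A \<union> B" "Y \<in> I" "card Y = mrank I (A \<union> B)"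
    using indep_extend_to_rank[OF Z(1), of "A \<union> B"] Z(2) by blast
  have fY: "finite Y"
    using indep_finite[OF Y(3)] .
  have "card (Y \<inter> A) \<le> mrank I A" "card (Y \<inter> B) \<le> mrank I B"
    using card_le_rank indep_subset[OF Y(3)] by blast+
  moreover have "(Y \<inter> A) \<union> (Y \<inter> B) = Y"
    using Y(2) by blast
  then have "card (Y \<inter> A) + card (Y \<inter> B) = card Y + card ((Y \<inter> A) \<inter> (Y \<inter> B))"
    using card_Un_Int[of "Y \<inter> A" "Y \<inter> B"] fY by simp
  moreover have "card Z \<le> card ((Y \<inter> A) \<inter> (Y \<inter> B))"
    using Y(1) Z(2) fY by (intro card_mono) auto
  ultimately show ?thesis
    using Y(4) Z(3) by linarith
qed

lemma rank_augment:
  assumes "mrank I Y1 < mrank I Y2"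
  shows "\<exists>y\<in>Y2 - Y1. mrank I (insert y Y1) = Suc (mrank I Y1)"
proof -
  obtain Z1 where Z1: "Z1 \<in> I" "Z1 \<subseteq> Y1" "card Z1 = mrank I Y1"
    using rank_witness by blast
  obtain Z2 where Z2: "Z2 \<in> I" "Z2 \<subseteq> Y2" "card Z2 = mrank I Y2"
    using rank_witness by blast
  obtain y where y: "y \<in> Z2 - Z1" "insert y Z1 \<in> I"
    using indep_augment[OF Z1(1) Z2(1)] Z1(3) Z2(3) assms by auto
  have card_y: "card (insert y Z1) = Suc (mrank I Y1)"
    using y(1) indep_finite[OF Z1(1)] Z1(3) by simp
  have "y \<notin> Y1"
    using card_le_rank[OF y(2), of Y1] card_y Z1(2) by auto
  moreover have "Suc (mrank I Y1) \<le> mrank I (insert y Y1)"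
    using card_le_rank[OF y(2), of "insert y Y1"] card_y Z1(2) by (simp add: subset_insertI2)
  moreover have "mrank I (insert y Y1) \<le> Suc (mrank I Y1)"
    using rank_Un_le[of "{y}" Y1] by simp
  ultimately show ?thesis
    using y(1) Z2(2) by (intro bexI[of _ y]) auto
qed

end

section \<open>Restriction and contraction\<close>

definition restriction :: "'a set set \<Rightarrow> 'a set \<Rightarrow> 'a set set" where
  "restriction I S = {X \<in> I. X \<subseteq> S}"

definition contraction :: "'a set \<Rightarrow> 'a set set \<Rightarrow> 'a set \<Rightarrow> 'a set set" where
  "contraction E I S = {Y. Y \<subseteq> E - S \<and> mrank I (Y \<union> S) = card Y + mrank I S}"

lemma rank_restriction: "X \<subseteq> S \<Longrightarrow> mrank (restriction I S) X = mrank I X"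
proof -
  assume "X \<subseteq> S"
  then have "{Y \<in> restriction I S. Y \<subseteq> X} = {Y \<in> I. Y \<subseteq> X}"
    unfolding restriction_def by blast
  then show ?thesis unfolding mrank_def by simp
qed

lemma mem_restriction: "X \<in> restriction I S \<longleftrightarrow> X \<in> I \<and> X \<subseteq> S"
  unfolding restriction_def by blast

context
  fixes E I
  assumes M: "matroid E I"
begin

lemma restriction_ground: "restriction I E = I"
  using indep_subset_ground[OF M] unfolding restriction_def by blast

lemma matroid_restriction:
  assumes S: "S \<subseteq> E"
  shows "matroid S (restriction I S)"
  unfolding matroid_def restriction_def
proof (intro conjI allI impI)
  show "finite S"
    using S finite_ground[OF M] finite_subset by blast
  show "{} \<in> {X \<in> I. X \<subseteq> S}"
    using empty_indep[OF M] by blast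
  show "\<forall>X\<in>{X \<in> I. X \<subseteq> S}. X \<subseteq> S"
    by blast
next
  fix X Y assume "Y \<in> {X \<in> I. X \<subseteq> S} \<and> X \<subseteq> Y"
  then show "X \<in> {X \<in> I. X \<subseteq> S}"
    using indep_subset[OF M] by blast
next
  fix X Y assume a: "X \<in> {X \<in> I. X \<subseteq> S} \<and> Y \<in> {X \<in> I. X \<subseteq> S} \<and> card X < card Y"
  then obtain y where "y \<in> Y - X" "insert y X \<in> I"
    using indep_augment[OF M, of X Y] by blast
  then show "\<exists>y\<in>Y - X. insert y X \<in> {X \<in> I. X \<subseteq> S}"
    using a by blast
qed

lemma contraction_eq:
  assumes S: "S \<subseteq> E" and X0: "X0 \<in> I" "X0 \<subseteq> S" "card X0 = mrank I S"
  shows "contraction E I S = {Y. Y \<subseteq> E - S \<and> Y \<union> X0 \<in> I}"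
proof (intro set_eqI iffI)
  fix Y assume "Y \<in> {Y. Y \<subseteq> E - S \<and> Y \<union> X0 \<in> I}"
  then have Y: "Y \<subseteq> E - S" "Y \<union> X0 \<in> I"
    by auto
  have fY: "finite Y"
    using Y(1) finite_ground[OF M] finite_subset by blast
  have fX: "finite X0"
    using indep_finite[OF M X0(1)] .
  have dis: "Y \<inter> X0 = {}"
    using Y(1) X0(2) by blast
  have "card (Y \<union> X0) \<le> mrank I (Y \<union> S)"
    by (rule card_le_rank[OF M Y(2)]) (use X0(2) in blast)
  moreover have "card (Y \<union> X0) = card Y + card X0"
    using card_Un_disjoint[OF fY fX dis] .
  moreover have "mrank I (S \<union> Y) \<le> mrank I S + card Y"
    using rank_Un_le[OF M fY] .
  moreover have "S \<union> Y = Y \<union> S"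
    by blast
  ultimately have "mrank I (Y \<union> S) = card Y + mrank I S"
    using X0(3) by simp
  then show "Y \<in> contraction E I S"
    unfolding contraction_def using Y(1) by blast
next
  fix Y assume "Y \<in> contraction E I S"
  then have Y: "Y \<subseteq> E - S" "mrank I (Y \<union> S) = card Y + mrank I S"
    unfolding contraction_def by auto
  have fY: "finite Y"
    using Y(1) finite_ground[OF M] finite_subset by blast
  obtain W where W: "X0 \<subseteq> W" "W \<subseteq> Y \<union> S" "W \<in> I" "card W = mrank I (Y \<union> S)"
    using indep_extend_to_rank[OF M X0(1), of "Y \<union> S"] X0(2) by blast
  have fW: "finite W"
    using indep_finite[OF M W(3)] .
  have c1: "card (W \<inter> S) \<le> mrank I S"
    by (rule card_le_rank[OF M]) (use indep_subset[OF M W(3)] in auto)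
  have eqW: "W = (W \<inter> S) \<union> (W \<inter> Y)"
    using W(2) by blast
  have "card ((W \<inter> S) \<union> (W \<inter> Y)) = card (W \<inter> S) + card (W \<inter> Y)"
    by (rule card_Un_disjoint) (use fW Y(1) in auto)
  then have "card W = card (W \<inter> S) + card (W \<inter> Y)"
    using eqW by simp
  then have "card Y \<le> card (W \<inter> Y)"
    using c1 W(4) Y(2) by linarith
  then have "W \<inter> Y = Y"
    using card_subset_eq[OF fY, of "W \<inter> Y"] card_mono[OF fY, of "W \<inter> Y"] by auto
  then have "Y \<union> X0 \<subseteq> W"
    using W(1) by blast
  then show "Y \<in> {Y. Y \<subseteq> E - S \<and> Y \<union> X0 \<in> I}"
    using indep_subset[OF M W(3)] Y(1) by blast
qed

lemma matroid_contraction: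
  assumes S: "S \<subseteq> E"
  shows "matroid (E - S) (contraction E I S)"
proof -
  obtain X0 where X0: "X0 \<in> I" "X0 \<subseteq> S" "card X0 = mrank I S"
    using rank_witness[OF M] by blast
  have C: "contraction E I S = {Y. Y \<subseteq> E - S \<and> Y \<union> X0 \<in> I}"
    using contraction_eq[OF S X0] .
  have fX: "finite X0"
    using indep_finite[OF M X0(1)] .
  show ?thesis unfolding matroid_def C
  proof (intro conjI allI impI)
    show "finite (E - S)"
      using finite_ground[OF M] by simp
    show "{} \<in> {Y. Y \<subseteq> E - S \<and> Y \<union> X0 \<in> I}"
      using X0 by simp
    show "\<forall>X\<in>{Y. Y \<subseteq> E - S \<and> Y \<union> X0 \<in> I}. X \<subseteq> E - S"
      by blast
  next
    fix X Y assume "Y \<in> {Y. Y \<subseteq> E - S \<and> Y \<union> X0 \<in> I} \<and> X \<subseteq> Y"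
    then show "X \<in> {Y. Y \<subseteq> E - S \<and> Y \<union> X0 \<in> I}"
      using indep_subset[OF M, of "Y \<union> X0" "X \<union> X0"] by blast
  next
    fix X Y assume "X \<in> {Y. Y \<subseteq> E - S \<and> Y \<union> X0 \<in> I} \<and> Y \<in> {Y. Y \<subseteq> E - S \<and> Y \<union> X0 \<in> I} \<and> card X < card Y"
    then have X: "X \<subseteq> E - S" "X \<union> X0 \<in> I" and Y: "Y \<subseteq> E - S" "Y \<union> X0 \<in> I" and c: "card X < card Y"
      by auto
    have fXX: "finite X" "finite Y"
      using X Y finite_ground[OF M] finite_subset by blast+
    have "card (X \<union> X0) = card X + card X0"
      by (rule card_Un_disjoint) (use fXX fX X X0 in auto)
    moreover have "card (Y \<union> X0) = card Y + card X0"
      by (rule card_Un_disjoint) (use fXX fX Y X0 in auto)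
    ultimately have "card (X \<union> X0) < card (Y \<union> X0)"
      using c by simp
    then obtain y where y: "y \<in> (Y \<union> X0) - (X \<union> X0)" "insert y (X \<union> X0) \<in> I"
      using indep_augment[OF M X(2) Y(2)] by blast
    then have "y \<in> Y - X" "insert y X \<union> X0 \<in> I"
      by auto
    note this
    moreover have "insert y X \<subseteq> E - S"
      using X(1) Y(1) \<open>y \<in> Y - X\<close> by blast
    ultimately show "\<exists>y\<in>Y - X. insert y X \<in> {Y. Y \<subseteq> E - S \<and> Y \<union> X0 \<in> I}"
      by blast
  qed
qed

lemma rank_contraction:
  assumes S: "S \<subseteq> E" and Y: "Y \<subseteq> E - S"
  shows "mrank (contraction E I S) Y + mrank I S = mrank I (Y \<union> S)"
proof -
  obtain X0 where X0: "X0 \<in> I" "X0 \<subseteq> S" "card X0 = mrank I S"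
    using rank_witness[OF M] by blast
  have C: "contraction E I S = {Y. Y \<subseteq> E - S \<and> Y \<union> X0 \<in> I}"
    using contraction_eq[OF S X0] .
  have MC: "matroid (E - S) (contraction E I S)"
    using matroid_contraction[OF S] .
  have fX: "finite X0"
    using indep_finite[OF M X0(1)] .
  obtain Y' where Y': "Y' \<in> contraction E I S" "Y' \<subseteq> Y" "card Y' = mrank (contraction E I S) Y"
    using rank_witness[OF MC] by blast
  have Y'2: "Y' \<subseteq> E - S" "Y' \<union> X0 \<in> I"
    using Y'(1) C by auto
  have fY': "finite Y'"
    using Y'2 finite_ground[OF M] finite_subset by blast
  have "card (Y' \<union> X0) = card Y' + card X0"
    by (rule card_Un_disjoint) (use fY' fX Y'2 X0 in auto)
  moreover have "card (Y' \<union> X0) \<le> mrank I (Y \<union> S)"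
    by (rule card_le_rank[OF M Y'2(2)]) (use Y'(2) X0(2) in blast)
  ultimately have le: "mrank (contraction E I S) Y + mrank I S \<le> mrank I (Y \<union> S)"
    using Y'(3) X0(3) by simp
  obtain W where W: "X0 \<subseteq> W" "W \<subseteq> Y \<union> S" "W \<in> I" "card W = mrank I (Y \<union> S)"
    using indep_extend_to_rank[OF M X0(1), of "Y \<union> S"] X0(2) by blast
  have fW: "finite W"
    using indep_finite[OF M W(3)] .
  have c1: "card (W \<inter> S) \<le> mrank I S"
    by (rule card_le_rank[OF M]) (use indep_subset[OF M W(3)] in auto)
  have cW: "card W = card (W \<inter> S) + card (W - S)"
    using card_Int_Diff[OF fW] by simp
  have "(W - S) \<union> X0 \<subseteq> W"
    using W(1) by blast
  then have "(W - S) \<union> X0 \<in> I"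
    using indep_subset[OF M W(3)] by blast
  moreover have "W - S \<subseteq> E - S"
    using indep_subset_ground[OF M W(3)] by blast
  ultimately have "W - S \<in> contraction E I S"
    using C by blast
  moreover have "W - S \<subseteq> Y"
    using W(2) by blast
  ultimately have "card (W - S) \<le> mrank (contraction E I S) Y"
    using card_le_rank[OF MC] by blast
  then have "mrank I (Y \<union> S) \<le> mrank (contraction E I S) Y + mrank I S"
    using cW c1 W(4) by linarith
  then show ?thesis using le by linarith
qed

lemma contraction_empty: "contraction E I {} = I"
proof (intro set_eqI iffI)
  fix Y assume "Y \<in> contraction E I {}"
  then have "Y \<subseteq> E" "mrank I Y = card Y"
    unfolding contraction_def using rank_empty[OF M] by auto
  then show "Y \<in> I"
    using indep_iff_rank[OF M] by blast
next
  fix Y assume Y: "Y \<in> I"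
  then have "Y \<subseteq> E"
    using indep_subset_ground[OF M] by blast
  moreover have "mrank I Y = card Y"
    using rank_indep[OF M Y] .
  ultimately show "Y \<in> contraction E I {}"
    unfolding contraction_def using rank_empty[OF M] by auto
qed

end

section \<open>The free product\<close>

context
  fixes S A T B
  assumes MA: "matroid S A" and MB: "matroid T B" and dis: "S \<inter> T = {}"
begin

lemma card_split: "X \<subseteq> S \<union> T \<Longrightarrow> card X = card (X \<inter> S) + card (X \<inter> T)"
proof -
  assume X: "X \<subseteq> S \<union> T"
  have "finite X"
    using X finite_ground[OF MA] finite_ground[OF MB] finite_subset by blast
  then have "card ((X \<inter> S) \<union> (X \<inter> T)) = card (X \<inter> S) + card (X \<inter> T)"
    using dis by (intro card_Un_disjoint) auto
  moreover have "(X \<inter> S) \<union> (X \<inter> T) = X"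
    using X by blast
  ultimately show ?thesis
    by simp
qed

lemma free_product_iff:
  "X \<in> free_product S A T B \<longleftrightarrow> X \<subseteq> S \<union> T \<and> X \<inter> S \<in> A \<and> card X \<le> mrank A S + mrank B (X \<inter> T)"
proof -
  have "mrank A (X \<inter> S) = card (X \<inter> S)" if "X \<inter> S \<in> A"
    using rank_indep[OF MA that] .
  moreover have "mrank A (X \<inter> S) \<le> mrank A S"
    by (rule rank_le_rank_ground[OF MA])
  ultimately show ?thesis
    unfolding free_product_def mlambda_def mnu_def using card_split[of X] by auto
qed

lemma insert_free_product_right:
  assumes X: "X \<in> free_product S A T B" and y: "y \<in> T - X"
  shows "insert y X \<in> free_product S A T B \<longleftrightarrow> Suc (card X) \<le> mrank A S + mrank B (insert y (X \<inter> T))"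
proof -
  have "finite X"
    using X finite_ground[OF MA] finite_ground[OF MB] finite_subset unfolding free_product_iff by blast
  moreover have "insert y X \<inter> S = X \<inter> S" "insert y X \<inter> T = insert y (X \<inter> T)"
    using y dis by auto
  ultimately show ?thesis
    using X y unfolding free_product_iff by auto
qed

lemma insert_free_product_left:
  assumes X: "X \<in> free_product S A T B" and x: "x \<in> S - X"
  shows "insert x X \<in> free_product S A T B \<longleftrightarrow>
    insert x (X \<inter> S) \<in> A \<and> Suc (card X) \<le> mrank A S + mrank B (X \<inter> T)"
proof -
  have "finite X"
    using X finite_ground[OF MA] finite_ground[OF MB] finite_subset unfolding free_product_iff by blast
  moreover have "insert x X \<inter> S = insert x (X \<inter> S)" "insert x X \<inter> T = X \<inter> T"
    using x dis by auto
  ultimately show ?thesis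
    using X x unfolding free_product_iff by auto
qed

lemma free_product_subset:
  assumes "Y \<in> free_product S A T B" and XY: "X \<subseteq> Y"
  shows "X \<in> free_product S A T B"
proof -
  have Y: "Y \<subseteq> S \<union> T" "Y \<inter> S \<in> A" "card Y \<le> mrank A S + mrank B (Y \<inter> T)"
    using assms(1) unfolding free_product_iff by auto
  have "card (X \<inter> T) + mrank B (Y \<inter> T) \<le> card (Y \<inter> T) + mrank B (X \<inter> T)"
    using nullity_mono[OF MB, of "X \<inter> T" "Y \<inter> T"] XY finite_ground[OF MB] by auto
  moreover have "card (X \<inter> S) \<le> card (Y \<inter> S)"
    using XY finite_ground[OF MA] by (intro card_mono) auto
  moreover have X: "X \<subseteq> S \<union> T"
    using XY Y(1) by blast
  ultimately have "card X \<le> mrank A S + mrank B (X \<inter> T)"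
    using card_split[OF X] card_split[OF Y(1)] Y(3) by linarith
  moreover have "X \<inter> S \<in> A"
    using indep_subset[OF MA Y(2)] XY by blast
  ultimately show ?thesis
    unfolding free_product_iff using X by blast
qed

lemma free_product_augment:
  assumes X: "X \<in> free_product S A T B" and Y: "Y \<in> free_product S A T B" and c: "card X < card Y"
  shows "\<exists>y\<in>Y - X. insert y X \<in> free_product S A T B"
proof -
  have XST: "X \<subseteq> S \<union> T" "X \<inter> S \<in> A" "card X \<le> mrank A S + mrank B (X \<inter> T)"
    and YST: "Y \<subseteq> S \<union> T" "Y \<inter> S \<in> A" "card Y \<le> mrank A S + mrank B (Y \<inter> T)"
    using X Y unfolding free_product_iff by auto
  show ?thesis
  proof (cases "card X < mrank A S + mrank B (X \<inter> T)")
    case slack: True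
    show ?thesis
    proof (cases "Y \<inter> T \<subseteq> X")
      case False
      then obtain y where y: "y \<in> Y \<inter> T" "y \<notin> X"
        by blast
      have "mrank B (X \<inter> T) \<le> mrank B (insert y (X \<inter> T))"
        by (rule rank_mono[OF MB]) blast
      then have "insert y X \<in> free_product S A T B"
        using insert_free_product_right[OF X] y slack by simp
      then show ?thesis
        using y by blast
    next
      case True
      then have "card (Y \<inter> T) \<le> card (X \<inter> T)"
        using finite_ground[OF MB] by (intro card_mono) auto
      then have "card (X \<inter> S) < card (Y \<inter> S)"
        using c card_split[OF XST(1)] card_split[OF YST(1)] by linarith
      then obtain x where x: "x \<in> Y \<inter> S - X \<inter> S" "insert x (X \<inter> S) \<in> A"
        using indep_augment[OF MA XST(2) YST(2)] by blast
      then have "insert x X \<in> free_product S A T B"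
        using insert_free_product_left[OF X, of x] slack by auto
      then show ?thesis
        using x by blast
    qed
  next
    case tight: False
    then have "mrank B (X \<inter> T) < mrank B (Y \<inter> T)"
      using XST(3) YST(3) c by linarith
    then obtain y where y: "y \<in> Y \<inter> T - X \<inter> T" "mrank B (insert y (X \<inter> T)) = Suc (mrank B (X \<inter> T))"
      using rank_augment[OF MB] by blast
    then have "insert y X \<in> free_product S A T B"
      using insert_free_product_right[OF X, of y] XST(3) tight by auto
    then show ?thesis
      using y by blast
  qed
qed

lemma matroid_free_product: "matroid (S \<union> T) (free_product S A T B)"
  unfolding matroid_def
proof (intro conjI allI impI ballI)
  show "finite (S \<union> T)"
    using finite_ground[OF MA] finite_ground[OF MB] by simp
  show "{} \<in> free_product S A T B"
    unfolding free_product_iff using empty_indep[OF MA] by simp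
next
  fix X assume "X \<in> free_product S A T B"
  then show "X \<subseteq> S \<union> T"
    unfolding free_product_iff by blast
next
  fix X Y assume "Y \<in> free_product S A T B \<and> X \<subseteq> Y"
  then show "X \<in> free_product S A T B"
    using free_product_subset by blast
next
  fix X Y assume "X \<in> free_product S A T B \<and> Y \<in> free_product S A T B \<and> card X < card Y"
  then show "\<exists>y\<in>Y - X. insert y X \<in> free_product S A T B"
    using free_product_augment by blast
qed

lemma rank_free_product_le:
  "mrank (free_product S A T B) Z
    \<le> min (mrank A (Z \<inter> S) + card (Z \<inter> T)) (mrank A S + mrank B (Z \<inter> T))"
proof -
  let ?K = "free_product S A T B"
  have MK: "matroid (S \<union> T) ?K"
    by (rule matroid_free_product)
  have fZT: "finite (Z \<inter> T)"
    using finite_ground[OF MB] by simp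
  obtain W where W: "W \<in> ?K" "W \<subseteq> Z" "card W = mrank ?K Z"
    using rank_witness[OF MK] by blast
  then have W': "W \<subseteq> S \<union> T" "W \<inter> S \<in> A" "card W \<le> mrank A S + mrank B (W \<inter> T)"
    unfolding free_product_iff by auto
  have WT: "W \<inter> T \<subseteq> Z \<inter> T"
    using W(2) by blast
  have "card (W \<inter> S) \<le> mrank A (Z \<inter> S)"
    using card_le_rank[OF MA W'(2)] W(2) by blast
  moreover have "card (W \<inter> T) \<le> card (Z \<inter> T)"
    using card_mono[OF fZT WT] .
  moreover have "mrank B (W \<inter> T) \<le> mrank B (Z \<inter> T)"
    using rank_mono[OF MB WT] .
  ultimately show ?thesis
    using card_split[OF W'(1)] W(3) W'(3) by simp
qed

lemma rank_free_product_ge: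
  "min (mrank A (Z \<inter> S) + card (Z \<inter> T)) (mrank A S + mrank B (Z \<inter> T))
    \<le> mrank (free_product S A T B) Z"
proof -
  let ?K = "free_product S A T B"
  have MK: "matroid (S \<union> T) ?K"
    by (rule matroid_free_product)
  have fZT: "finite (Z \<inter> T)"
    using finite_ground[OF MB] by simp
  have rA: "mrank A (Z \<inter> S) \<le> mrank A S"
    using rank_le_rank_ground[OF MA] .
  \<comment> \<open>Extend a basis of \<open>Z \<inter> T\<close> inside \<open>Z \<inter> T\<close> as far as the slack
    \<open>mrank A S - mrank A (Z \<inter> S)\<close> allows, and add a basis of \<open>Z \<inter> S\<close>.\<close>
  obtain X0 where X0: "X0 \<in> A" "X0 \<subseteq> Z \<inter> S" "card X0 = mrank A (Z \<inter> S)"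
    using rank_witness[OF MA] by blast
  obtain Y0 where Y0: "Y0 \<in> B" "Y0 \<subseteq> Z \<inter> T" "card Y0 = mrank B (Z \<inter> T)"
    using rank_witness[OF MB] by blast
  define m where "m = min (card (Z \<inter> T)) (mrank B (Z \<inter> T) + (mrank A S - mrank A (Z \<inter> S)))"
  have "card Y0 \<le> m" "m \<le> card (Z \<inter> T)"
    unfolding m_def using Y0(3) rank_le_card[OF MB fZT] by simp_all
  then obtain Y' where Y': "Y0 \<subseteq> Y'" "Y' \<subseteq> Z \<inter> T" "card Y' = m"
    using exists_subset_between[OF _ _ Y0(2) fZT] by blast
  have XY: "X0 \<union> Y' \<subseteq> S \<union> T" "(X0 \<union> Y') \<inter> S = X0" "(X0 \<union> Y') \<inter> T = Y'"
    using X0(2) Y'(2) dis by blast+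
  have card_XY: "card (X0 \<union> Y') = card X0 + card Y'"
    using card_split[OF XY(1)] unfolding XY(2,3) .
  have "mrank B (Z \<inter> T) \<le> mrank B Y'"
    using card_le_rank[OF MB Y0(1) Y'(1)] Y0(3) by simp
  moreover have "m \<le> mrank B (Z \<inter> T) + (mrank A S - mrank A (Z \<inter> S))"
    unfolding m_def by (rule min.cobounded2)
  ultimately have "card (X0 \<union> Y') \<le> mrank A S + mrank B ((X0 \<union> Y') \<inter> T)"
    unfolding XY(3) card_XY using X0(3) Y'(3) rA by linarith
  then have "X0 \<union> Y' \<in> ?K"
    unfolding free_product_iff XY(2) using XY(1) X0(1) by blast
  then have "card (X0 \<union> Y') \<le> mrank ?K Z"
    using card_le_rank[OF MK] X0(2) Y'(2) by blast
  then have "mrank A (Z \<inter> S) + m \<le> mrank ?K Z"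
    unfolding card_XY X0(3) Y'(3) .
  moreover have "mrank A (Z \<inter> S) + m
      = min (mrank A (Z \<inter> S) + card (Z \<inter> T)) (mrank A S + mrank B (Z \<inter> T))"
    unfolding m_def using rA by (auto simp: min_def)
  ultimately show ?thesis
    by simp
qed

lemma rank_free_product:
  "mrank (free_product S A T B) Z
    = min (mrank A (Z \<inter> S) + card (Z \<inter> T)) (mrank A S + mrank B (Z \<inter> T))"
  using rank_free_product_le rank_free_product_ge by (rule antisym)

lemma rank_free_product_left: "X \<subseteq> S \<Longrightarrow> mrank (free_product S A T B) X = mrank A X"
proof -
  assume X: "X \<subseteq> S"
  then have "X \<inter> S = X" "X \<inter> T = {}"
    using dis by auto
  then show ?thesis
    using rank_free_product[of X] rank_empty[OF MB] rank_le_rank_ground[OF MA, of X] by simp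
qed

lemma rank_free_product_left_Un: "Y \<subseteq> T \<Longrightarrow> mrank (free_product S A T B) (S \<union> Y) = mrank A S + mrank B Y"
proof -
  assume Y: "Y \<subseteq> T"
  then have "(S \<union> Y) \<inter> S = S" "(S \<union> Y) \<inter> T = Y"
    using dis by auto
  then show ?thesis
    using rank_free_product[of "S \<union> Y"] rank_le_card[OF MB finite_subset[OF Y finite_ground[OF MB]]] by simp
qed

lemma restriction_free_product: "restriction (free_product S A T B) S = A"
proof (intro set_eqI iffI)
  fix X assume "X \<in> restriction (free_product S A T B) S"
  then have "X \<in> free_product S A T B" "X \<subseteq> S"
    unfolding mem_restriction by auto
  moreover have "X \<inter> S = X"
    using \<open>X \<subseteq> S\<close> by blast
  ultimately show "X \<in> A"
    unfolding free_product_iff by simp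
next
  fix X assume X: "X \<in> A"
  have XS: "X \<subseteq> S"
    using indep_subset_ground[OF MA X] .
  have e: "X \<inter> S = X" "X \<inter> T = {}"
    using XS dis by auto
  have "card X \<le> mrank A S"
    using card_le_rank[OF MA X XS] .
  then have "X \<in> free_product S A T B"
    unfolding free_product_iff e using X XS rank_empty[OF MB] by auto
  then show "X \<in> restriction (free_product S A T B) S"
    unfolding mem_restriction using XS by simp
qed

lemma contraction_free_product: "contraction (S \<union> T) (free_product S A T B) S = B"
proof (intro set_eqI)
  fix Y
  have e: "S \<union> T - S = T"
    using dis by blast
  show "Y \<in> contraction (S \<union> T) (free_product S A T B) S \<longleftrightarrow> Y \<in> B"
  proof (cases "Y \<subseteq> T")
    case True
    have "mrank (free_product S A T B) (Y \<union> S) = mrank A S + mrank B Y"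
      using rank_free_product_left_Un[OF True] by (simp add: Un_commute)
    moreover have "mrank (free_product S A T B) S = mrank A S"
      using rank_free_product_left[of S] by simp
    moreover have "Y \<in> B \<longleftrightarrow> mrank B Y = card Y"
      using indep_iff_rank[OF MB True] .
    ultimately show ?thesis unfolding contraction_def e using True by auto
  next
    case False
    then show ?thesis unfolding contraction_def e using indep_subset_ground[OF MB] by blast
  qed
qed

end

section \<open>Separators\<close>

text \<open>For \<open>X \<subseteq> S\<close> and \<open>Y \<subseteq> E - S\<close>, the rank of \<open>M|S \<box> M/S\<close> at \<open>X \<union> Y\<close> is
  \<open>min (r X + |Y|) (r (S \<union> Y))\<close>, an upper bound for the rank in \<open>M\<close>. So the inequality below
  says that \<open>M = M|S \<box> M/S\<close> (\<open>separator_factorization\<close>).\<close>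

definition separator :: "'a set \<Rightarrow> 'a set set \<Rightarrow> 'a set \<Rightarrow> bool" where
  "separator E I S \<longleftrightarrow> S \<subseteq> E \<and> (\<forall>X Y. X \<subseteq> S \<longrightarrow> Y \<subseteq> E - S \<longrightarrow>
      min (mrank I X + card Y) (mrank I (S \<union> Y)) \<le> mrank I (X \<union> Y))"

lemma separatorD: "separator E I S \<Longrightarrow> X \<subseteq> S \<Longrightarrow> Y \<subseteq> E - S \<Longrightarrow>
      min (mrank I X + card Y) (mrank I (S \<union> Y)) \<le> mrank I (X \<union> Y)"
  unfolding separator_def by blast

lemma separator_subset: "separator E I S \<Longrightarrow> S \<subseteq> E"
  unfolding separator_def by blast

lemma separator_ground: "separator E I E"
  unfolding separator_def by auto

lemma separator_free_product:
  assumes MA: "matroid S A" and MB: "matroid T B" and dis: "S \<inter> T = {}"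
  shows "separator (S \<union> T) (free_product S A T B) S"
  unfolding separator_def
proof (intro conjI allI impI)
  fix X Y assume X: "X \<subseteq> S" and Y: "Y \<subseteq> S \<union> T - S"
  have YT: "Y \<subseteq> T"
    using Y by blast
  have "(X \<union> Y) \<inter> S = X" "(X \<union> Y) \<inter> T = Y"
    using X YT dis by auto
  then have "mrank (free_product S A T B) (X \<union> Y) = min (mrank A X + card Y) (mrank A S + mrank B Y)"
    using rank_free_product[OF MA MB dis, of "X \<union> Y"] by simp
  then show "min (mrank (free_product S A T B) X + card Y) (mrank (free_product S A T B) (S \<union> Y))
         \<le> mrank (free_product S A T B) (X \<union> Y)"
    using rank_free_product_left[OF MA MB dis X] rank_free_product_left_Un[OF MA MB dis YT] by simp
qed simp

context
  fixes E I
  assumes M: "matroid E I"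
begin

lemma separator_indep_iff:
  assumes sp: "separator E I S" and J: "J \<subseteq> E"
  shows "J \<in> I \<longleftrightarrow> J \<inter> S \<in> I \<and> card J \<le> mrank I (S \<union> (J - S))"
proof
  assume "J \<in> I"
  moreover have "J \<inter> S \<in> I"
    using indep_subset[OF M \<open>J \<in> I\<close>] by blast
  moreover have "card J \<le> mrank I (S \<union> (J - S))"
    using card_le_rank[OF M \<open>J \<in> I\<close>, of "S \<union> (J - S)"] by blast
  ultimately show "J \<inter> S \<in> I \<and> card J \<le> mrank I (S \<union> (J - S))"
    by blast
next
  assume a: "J \<inter> S \<in> I \<and> card J \<le> mrank I (S \<union> (J - S))"
  have S: "S \<subseteq> E"
    using sp unfolding separator_def by blast
  have fJ: "finite J"
    using J finite_ground[OF M] finite_subset by blast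
  have "min (mrank I (J \<inter> S) + card (J - S)) (mrank I (S \<union> (J - S))) \<le> mrank I ((J \<inter> S) \<union> (J - S))"
    using separatorD[OF sp, of "J \<inter> S" "J - S"] J by blast
  moreover have "(J \<inter> S) \<union> (J - S) = J"
    by blast
  moreover have "mrank I (J \<inter> S) = card (J \<inter> S)"
    using rank_indep[OF M] a by blast
  moreover have "card J = card (J \<inter> S) + card (J - S)"
    using card_Int_Diff[OF fJ] by simp
  ultimately have "card J \<le> mrank I J"
    using a by simp
  then have "mrank I J = card J"
    using rank_le_card[OF M fJ] by simp
  then show "J \<in> I"
    using indep_iff_rank[OF M J] by simp
qed

lemma separator_factorization:
  assumes sp: "separator E I S"
  shows "free_product S (restriction I S) (E - S) (contraction E I S) = I"
proof -
  have S: "S \<subseteq> E"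
    using sp unfolding separator_def by blast
  have SE: "S \<union> (E - S) = E"
    using S by blast
  show ?thesis
  proof (intro set_eqI)
    fix J
    show "J \<in> free_product S (restriction I S) (E - S) (contraction E I S) \<longleftrightarrow> J \<in> I"
    proof (cases "J \<subseteq> E")
      case False
      then show ?thesis using indep_subset_ground[OF M] unfolding free_product_def SE by blast
    next
      case J: True
      have fJ: "finite J"
        using J finite_ground[OF M] finite_subset by blast
      have e1: "J \<inter> (E - S) = J - S"
        using J by blast
      have r2: "mrank (contraction E I S) (J - S) + mrank I S = mrank I ((J - S) \<union> S)"
        using rank_contraction[OF M S, of "J - S"] J by blast
      have cJ: "card J = card (J \<inter> S) + card (J - S)"
        using card_Int_Diff[OF fJ] by simp
      have "J \<in> free_product S (restriction I S) (E - S) (contraction E I S) \<longleftrightarrow>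
          J \<inter> S \<in> I \<and> int (mrank I S) - int (mrank I (J \<inter> S)) \<ge> int (card (J - S)) - int (mrank (contraction E I S) (J - S))"
        unfolding free_product_def mlambda_def mnu_def SE using J e1
        by (simp add: mem_restriction rank_restriction)
      also have "\<dots> \<longleftrightarrow> J \<inter> S \<in> I \<and> card J \<le> mrank I (S \<union> (J - S))"
      proof -
        have "J \<inter> S \<in> I \<Longrightarrow> mrank I (J \<inter> S) = card (J \<inter> S)"
          using rank_indep[OF M] by blast
        moreover have "(J - S) \<union> S = S \<union> (J - S)"
          by blast
        ultimately show ?thesis using r2 cJ by auto
      qed
      also have "\<dots> \<longleftrightarrow> J \<in> I"
        using separator_indep_iff[OF sp J] by simp
      finally show ?thesis .
    qed
  qed
qed

lemma separator_restriction:
  assumes s: "separator E I S'" and SE: "S \<subseteq> E"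
  shows "separator S (restriction I S) (S \<inter> S')"
  unfolding separator_def
proof (intro conjI allI impI)
  fix X Y assume X: "X \<subseteq> S \<inter> S'" and Y: "Y \<subseteq> S - S \<inter> S'"
  have "X \<subseteq> S'" "Y \<subseteq> E - S'"
    using X Y SE by auto
  then have "min (mrank I X + card Y) (mrank I (S' \<union> Y)) \<le> mrank I (X \<union> Y)"
    by (rule separatorD[OF s])
  moreover have "min (mrank I X + card Y) (mrank I (S \<inter> S' \<union> Y))
      \<le> min (mrank I X + card Y) (mrank I (S' \<union> Y))"
    by (intro min.mono order_refl rank_mono[OF M]) blast
  moreover have "X \<subseteq> S" "S \<inter> S' \<union> Y \<subseteq> S" "X \<union> Y \<subseteq> S"
    using X Y by auto
  ultimately show "min (mrank (restriction I S) X + card Y) (mrank (restriction I S) (S \<inter> S' \<union> Y))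
      \<le> mrank (restriction I S) (X \<union> Y)"
    by (simp add: rank_restriction)
qed auto

lemma separator_trans:
  assumes s: "separator E I S" and s1: "separator S (restriction I S) S1"
  shows "separator E I S1"
  unfolding separator_def
proof (intro conjI allI impI)
  have S1S: "S1 \<subseteq> S"
    using separator_subset[OF s1] .
  then show "S1 \<subseteq> E"
    using separator_subset[OF s] by blast
  fix X Y assume X: "X \<subseteq> S1" and Y: "Y \<subseteq> E - S1"
  let ?Y1 = "Y \<inter> S" and ?Y2 = "Y - S" and ?R = "mrank I (X \<union> Y)"
  have fin: "finite Y" "finite ?Y2"
    using Y finite_subset_ground[OF M] by blast+
  have sub: "?Y1 \<subseteq> S - S1" "X \<subseteq> S" "S1 \<union> ?Y1 \<subseteq> S" "X \<union> ?Y1 \<subseteq> S"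
    using X Y S1S by auto
  have h1: "min (mrank I X + card ?Y1) (mrank I (S1 \<union> ?Y1)) \<le> mrank I (X \<union> ?Y1)"
    using separatorD[OF s1 X sub(1)] unfolding rank_restriction[OF sub(2)] rank_restriction[OF sub(3)]
      rank_restriction[OF sub(4)] .
  have "X \<union> ?Y1 \<subseteq> S" "?Y2 \<subseteq> E - S" "(X \<union> ?Y1) \<union> ?Y2 = X \<union> Y"
    using X Y S1S by auto
  then have h2: "min (mrank I (X \<union> ?Y1) + card ?Y2) (mrank I (S \<union> ?Y2)) \<le> ?R"
    using separatorD[OF s] by metis
  have "mrank I (S1 \<union> Y) \<le> mrank I (S \<union> ?Y2)"
    using S1S by (intro rank_mono[OF M]) blast
  moreover have "mrank I (S1 \<union> Y) \<le> mrank I (S1 \<union> ?Y1) + card ?Y2"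
    using rank_Un_le[OF M fin(2), of "S1 \<union> ?Y1"] by (simp add: Un_assoc Int_Diff_Un)
  moreover have "card Y = card ?Y1 + card ?Y2"
    using card_Int_Diff[OF fin(1)] .
  ultimately show "min (mrank I X + card Y) (mrank I (S1 \<union> Y)) \<le> ?R"
    using h1 h2 by (auto simp: min_le_iff_disj)
qed

lemma separator_rank_Un_ge:
  assumes s: "separator E I S" and X: "X \<subseteq> E" and Y: "Y \<subseteq> E - S" and XY: "X \<inter> Y = {}"
  shows "min (mrank I X + card Y) (mrank I (S \<union> X \<union> Y)) \<le> mrank I (X \<union> Y)"
proof -
  have fin: "finite (X - S)" "finite Y"
    using X Y finite_subset_ground[OF M] by blast+
  have "(X - S) \<union> Y \<subseteq> E - S"
    using X Y by blast
  then have "min (mrank I (X \<inter> S) + card ((X - S) \<union> Y)) (mrank I (S \<union> ((X - S) \<union> Y)))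
      \<le> mrank I ((X \<inter> S) \<union> ((X - S) \<union> Y))"
    by (intro separatorD[OF s]) auto
  moreover have "card ((X - S) \<union> Y) = card (X - S) + card Y"
    using fin XY by (intro card_Un_disjoint) auto
  moreover have "mrank I X \<le> mrank I (X \<inter> S) + card (X - S)"
    using rank_Un_le[OF M fin(1), of "X \<inter> S"] by (simp add: Int_Diff_Un)
  moreover have "(X \<inter> S) \<union> ((X - S) \<union> Y) = X \<union> Y" "S \<union> ((X - S) \<union> Y) = S \<union> X \<union> Y"
    by blast+
  ultimately show ?thesis
    by (simp add: min_le_iff_disj) linarith
qed

lemma separator_Un:
  assumes s1: "separator E I S" and s2: "separator E I S'"
  shows "separator E I (S \<union> S')"
  unfolding separator_def
proof (intro conjI allI impI)
  have SE: "S \<subseteq> E" "S' \<subseteq> E"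
    using separator_subset s1 s2 by blast+
  then show "S \<union> S' \<subseteq> E"
    by blast
  fix X Y assume X: "X \<subseteq> S \<union> S'" and Y: "Y \<subseteq> E - (S \<union> S')"
  let ?R = "mrank I (X \<union> Y)"
  have XE: "X \<subseteq> E" and XY: "X \<inter> Y = {}" and YS: "Y \<subseteq> E - S" "Y \<subseteq> E - S'"
    using X Y SE by blast+
  have h1: "mrank I X + card Y \<le> ?R \<or> mrank I (S \<union> X \<union> Y) \<le> ?R"
    using separator_rank_Un_ge[OF s1 XE YS(1) XY] unfolding min_le_iff_disj .
  have h2: "mrank I X + card Y \<le> ?R \<or> mrank I (S' \<union> X \<union> Y) \<le> ?R"
    using separator_rank_Un_ge[OF s2 XE YS(2) XY] unfolding min_le_iff_disj .
  have "mrank I ((S \<union> X \<union> Y) \<union> (S' \<union> X \<union> Y)) + mrank I ((S \<union> X \<union> Y) \<inter> (S' \<union> X \<union> Y))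
      \<le> mrank I (S \<union> X \<union> Y) + mrank I (S' \<union> X \<union> Y)"
    by (rule rank_submodular[OF M])
  moreover have "(S \<union> X \<union> Y) \<union> (S' \<union> X \<union> Y) = S \<union> S' \<union> Y"
    using X by blast
  moreover have "?R \<le> mrank I ((S \<union> X \<union> Y) \<inter> (S' \<union> X \<union> Y))"
    by (rule rank_mono[OF M]) blast
  ultimately have "mrank I X + card Y \<le> ?R \<or> mrank I (S \<union> S' \<union> Y) \<le> ?R"
    using h1 h2 by auto
  then show "min (mrank I X + card Y) (mrank I (S \<union> S' \<union> Y)) \<le> ?R"
    unfolding min_le_iff_disj .
qed

lemma complementary_separators_rank:
  assumes sP: "separator E I P" and sQ: "separator E I (E - P)" and ne: "P \<noteq> {}"
    and Y: "Y \<subseteq> E - P"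
  shows "mrank I Y = min (card Y) (mrank I E)"
proof -
  have PE: "P \<subseteq> E"
    using separator_subset[OF sP] .
  then have "1 \<le> card P"
    using ne finite_subset_ground[OF M PE] by (simp add: Suc_le_eq card_gt_0_iff)
  moreover have "card Y \<le> mrank I Y \<or> mrank I (P \<union> Y) \<le> mrank I Y"
    using separatorD[OF sP empty_subsetI Y] rank_empty[OF M] unfolding min_le_iff_disj by simp
  moreover have eqs: "P \<subseteq> E - (E - P)" "(E - P) \<union> P = E" "Y \<union> P = P \<union> Y"
    using PE by blast+
  have "mrank I Y + card P \<le> mrank I (P \<union> Y) \<or> mrank I E \<le> mrank I (P \<union> Y)"
    using separatorD[OF sQ Y eqs(1)] unfolding eqs(2,3) min_le_iff_disj .
  moreover have "mrank I Y \<le> card Y" "mrank I Y \<le> mrank I E"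
    using rank_le_card[OF M finite_subset_ground[OF M]] rank_le_rank_ground[OF M] Y by blast+
  ultimately show ?thesis
    by (auto simp: min_def)
qed

lemma complementary_separators_uniform:
  assumes sP: "separator E I P" and sQ: "separator E I (E - P)" and ne: "P \<noteq> {}" and ne2: "E - P \<noteq> {}"
    and Z: "Z \<subseteq> E"
  shows "mrank I Z = min (card Z) (mrank I E)"
proof -
  let ?X = "Z \<inter> P" and ?Y = "Z - P"
  have PE: "P \<subseteq> E"
    using separator_subset[OF sP] .
  then have EEP: "E - (E - P) = P"
    by blast
  have sQ': "separator E I (E - (E - P))"
    unfolding EEP by (rule sP)
  have XQ: "?X \<subseteq> E - (E - P)" and YP: "?Y \<subseteq> E - P"
    using EEP Z by blast+
  have "mrank I ?X = min (card ?X) (mrank I E)"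
    by (rule complementary_separators_rank[OF sQ sQ' ne2 XQ])
  then have rX: "mrank I ?X = card ?X \<or> mrank I ?X = mrank I E"
    by (simp add: min_def)
  have "mrank I ?Y = min (card ?Y) (mrank I E)"
    by (rule complementary_separators_rank[OF sP sQ ne YP])
  then have rY: "mrank I ?Y = card ?Y \<or> mrank I ?Y = mrank I E"
    by (simp add: min_def)
  have eqs: "P \<subseteq> E - (E - P)" "(E - P) \<union> P = E" "?Y \<union> P = P \<union> ?Y"
    using PE by blast+
  have "mrank I ?X + card ?Y \<le> mrank I Z \<or> mrank I (P \<union> ?Y) \<le> mrank I Z"
    using separatorD[OF sP Int_lower2[of Z P] YP] unfolding min_le_iff_disj Int_Diff_Un .
  moreover have "mrank I ?Y + card P \<le> mrank I (P \<union> ?Y) \<or> mrank I E \<le> mrank I (P \<union> ?Y)"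
    using separatorD[OF sQ YP eqs(1)] unfolding eqs(2,3) min_le_iff_disj .
  moreover have "card ?X \<le> card P"
    using card_mono[OF finite_subset_ground[OF M PE]] by blast
  moreover have "card Z = card ?X + card ?Y"
    using card_Int_Diff[OF finite_subset_ground[OF M Z]] .
  ultimately have "card Z \<le> mrank I Z \<or> mrank I E \<le> mrank I Z"
    using rX rY by linarith
  moreover have "mrank I Z \<le> card Z" "mrank I Z \<le> mrank I E"
    using rank_le_card[OF M finite_subset_ground[OF M Z]] rank_le_rank_ground[OF M] .
  ultimately show ?thesis
    by (auto simp: min_def)
qed

lemma uniform_singleton_separator:
  assumes U: "\<And>Z. Z \<subseteq> E \<Longrightarrow> mrank I Z = min (card Z) R" and e: "e \<in> E"
  shows "separator E I {e}"
  unfolding separator_def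
proof (intro conjI allI impI)
  show "{e} \<subseteq> E"
    using e by blast
  fix X Y assume X: "X \<subseteq> {e}" and Y: "Y \<subseteq> E - {e}"
  have fX: "finite X"
    using X finite_subset by blast
  have fY: "finite Y"
    using finite_subset_ground[OF M] Y by blast
  have c: "card (X \<union> Y) = card X + card Y"
    by (rule card_Un_disjoint) (use fX fY X Y in auto)
  have r1: "mrank I (X \<union> Y) = min (card X + card Y) R"
    using U[of "X \<union> Y"] X Y e c by auto
  have eY: "{e} \<union> Y \<subseteq> E"
    using Y e by blast
  have r2: "mrank I ({e} \<union> Y) \<le> R"
    unfolding U[OF eY] by (rule min.cobounded2)
  have r3: "mrank I X \<le> card X"
    using rank_le_card[OF M fX] .
  show "min (mrank I X + card Y) (mrank I ({e} \<union> Y)) \<le> mrank I (X \<union> Y)"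
    unfolding r1 using r2 r3 by (simp add: min_def)
qed

end

lemma irreducible_imp_matroid: "irreducible_matroid E I \<Longrightarrow> matroid E I"
  unfolding irreducible_matroid_def by blast

lemma irreducible_separator_trivial:
  assumes irr: "irreducible_matroid E I" and s: "separator E I S"
  shows "S = {} \<or> S = E"
proof -
  have M: "matroid E I"
    using irreducible_imp_matroid[OF irr] .
  have SE: "S \<subseteq> E"
    using separator_subset[OF s] .
  have "matroid S' IS \<and> matroid T IT \<and> S' \<inter> T = {} \<and> S' \<union> T = E \<and> free_product S' IS T IT = I
      \<longrightarrow> (S', IS) = (E, I) \<or> (T, IT) = (E, I)" for S' IS T IT
    using irr unfolding irreducible_matroid_def by blast
  moreover have "S \<inter> (E - S) = {}" "S \<union> (E - S) = E"
    using SE by blast+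
  ultimately have "(S, restriction I S) = (E, I) \<or> (E - S, contraction E I S) = (E, I)"
    using matroid_restriction[OF M SE] matroid_contraction[OF M SE] separator_factorization[OF M s]
    by blast
  then show ?thesis
    using SE by blast
qed

lemma irreducible_if_separators_trivial:
  assumes M: "matroid E I" and ne: "E \<noteq> {}"
    and trivial: "\<And>S. separator E I S \<Longrightarrow> S = {} \<or> S = E"
  shows "irreducible_matroid E I"
  unfolding irreducible_matroid_def
proof (intro conjI allI impI M ne)
  fix S IS T IT
  assume "matroid S IS \<and> matroid T IT \<and> S \<inter> T = {} \<and> S \<union> T = E \<and> free_product S IS T IT = I"
  then have MS: "matroid S IS" and MT: "matroid T IT" and d: "S \<inter> T = {}" and u: "S \<union> T = E"
    and p: "free_product S IS T IT = I"
    by blast+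
  have "separator E I S" "restriction I S = IS" "contraction E I S = IT"
    using separator_free_product[OF MS MT d] restriction_free_product[OF MS MT d]
      contraction_free_product[OF MS MT d] unfolding p u by simp_all
  moreover have "T = E - S"
    using u d by blast
  ultimately show "(S, IS) = (E, I) \<or> (T, IT) = (E, I)"
    using trivial contraction_empty[OF M] restriction_ground[OF M] by auto
qed

lemma irreducible_iff_separators:
  "irreducible_matroid E I \<longleftrightarrow> matroid E I \<and> E \<noteq> {} \<and> (\<forall>S. separator E I S \<longrightarrow> S = {} \<or> S = E)"
proof
  assume irr: "irreducible_matroid E I"
  have "E \<noteq> {}"
    using irr by (simp add: irreducible_matroid_def)
  then show "matroid E I \<and> E \<noteq> {} \<and> (\<forall>S. separator E I S \<longrightarrow> S = {} \<or> S = E)"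
    using irreducible_imp_matroid[OF irr] irreducible_separator_trivial[OF irr] by blast
qed (blast intro: irreducible_if_separators_trivial)

lemma irreducible_uniform_singleton:
  assumes irr: "irreducible_matroid E I" and U: "\<And>Z. Z \<subseteq> E \<Longrightarrow> mrank I Z = min (card Z) R"
  shows "\<exists>e. E = {e}"
proof -
  have M: "matroid E I" and ne: "E \<noteq> {}" and H: "\<And>S. separator E I S \<Longrightarrow> S = {} \<or> S = E"
    using irr unfolding irreducible_iff_separators by blast+
  obtain e where e: "e \<in> E"
    using ne by blast
  have "separator E I {e}"
    using uniform_singleton_separator[OF M U e] .
  then have "{e} = E"
    using H by blast
  then show ?thesis by blast
qed

section \<open>Isomorphisms\<close>

definition iso_map :: "('a \<Rightarrow> 'b) \<Rightarrow> 'a set \<Rightarrow> 'a set set \<Rightarrow> 'b set \<Rightarrow> 'b set set \<Rightarrow> bool" where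
  "iso_map f E I E' I' \<longleftrightarrow> bij_betw f E E' \<and> (\<forall>X. X \<subseteq> E \<longrightarrow> (X \<in> I \<longleftrightarrow> f ` X \<in> I'))"

lemma matroid_iso_iff_iso_map: "matroid_iso (E, I) (E', I') \<longleftrightarrow> (\<exists>f. iso_map f E I E' I')"
  unfolding matroid_iso_def iso_map_def by simp

lemma iso_mapD: "iso_map f E I E' I' \<Longrightarrow> X \<subseteq> E \<Longrightarrow> X \<in> I \<longleftrightarrow> f ` X \<in> I'"
  unfolding iso_map_def by blast

lemma iso_map_bij: "iso_map f E I E' I' \<Longrightarrow> bij_betw f E E'"
  unfolding iso_map_def by blast

lemma rank_le_rank_iso_map:
  assumes M: "matroid E I" and M': "matroid E' I'" and f: "iso_map f E I E' I'" and Z: "Z \<subseteq> E"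
  shows "mrank I Z \<le> mrank I' (f ` Z)"
proof -
  obtain Y where Y: "Y \<in> I" "Y \<subseteq> Z" "card Y = mrank I Z"
    using rank_witness[OF M] by blast
  have YE: "Y \<subseteq> E"
    using Y Z by blast
  have "f ` Y \<in> I'"
    using iso_mapD[OF f YE] Y(1) by blast
  then have "card (f ` Y) \<le> mrank I' (f ` Z)"
    using card_le_rank[OF M'] Y(2) by blast
  moreover have "card (f ` Y) = card Y"
    using card_image[OF inj_on_subset[OF bij_betw_imp_inj_on[OF iso_map_bij[OF f]] YE]] .
  ultimately show ?thesis
    using Y(3) by simp
qed

lemma iso_map_inv:
  assumes f: "iso_map f E I E' I'"
  shows "iso_map (inv_into E f) E' I' E I"
  unfolding iso_map_def
proof (intro conjI allI impI)
  have b: "bij_betw f E E'"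
    using iso_map_bij[OF f] .
  show "bij_betw (inv_into E f) E' E"
    using bij_betw_inv_into[OF b] .
  fix X assume X: "X \<subseteq> E'"
  have s: "inv_into E f ` X \<subseteq> E"
    using X b by (metis bij_betw_def bij_betw_inv_into image_mono)
  have c: "f ` (inv_into E f ` X) = X"
    using image_inv_into_cancel[of f E E' X] b X unfolding bij_betw_def by blast
  show "X \<in> I' \<longleftrightarrow> inv_into E f ` X \<in> I"
    using iso_mapD[OF f s] c by simp
qed

lemma rank_iso_map:
  assumes M: "matroid E I" and M': "matroid E' I'" and f: "iso_map f E I E' I'" and Z: "Z \<subseteq> E"
  shows "mrank I' (f ` Z) = mrank I Z"
proof -
  have bij: "bij_betw f E E'"
    using iso_map_bij[OF f] .
  then have "f ` Z \<subseteq> E'" "inv_into E f ` f ` Z = Z"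
    using Z by (auto simp: bij_betw_def inv_into_image_cancel)
  then have "mrank I' (f ` Z) \<le> mrank I Z"
    using rank_le_rank_iso_map[OF M' M iso_map_inv[OF f]] by metis
  then show ?thesis
    using rank_le_rank_iso_map[OF M M' f Z] by simp
qed

lemma iso_map_comp:
  assumes f: "iso_map f E I E' I'" and g: "iso_map g E' I' E'' I''"
  shows "iso_map (g \<circ> f) E I E'' I''"
  unfolding iso_map_def
proof (intro conjI allI impI)
  show "bij_betw (g \<circ> f) E E''"
    using bij_betw_trans[OF iso_map_bij[OF f] iso_map_bij[OF g]] .
  fix X assume X: "X \<subseteq> E"
  have "f ` X \<subseteq> E'"
    using X iso_map_bij[OF f] unfolding bij_betw_def by blast
  then show "X \<in> I \<longleftrightarrow> (g \<circ> f) ` X \<in> I''"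
    using iso_mapD[OF f X] iso_mapD[OF g] by (simp add: image_comp)
qed

lemma separator_iso_map:
  assumes M: "matroid E I" and M': "matroid E' I'" and f: "iso_map f E I E' I'" and s: "separator E I S"
  shows "separator E' I' (f ` S)"
  unfolding separator_def
proof (intro conjI allI impI)
  have b: "bij_betw f E E'"
    using iso_map_bij[OF f] .
  have inj: "inj_on f E"
    using b unfolding bij_betw_def by blast
  have fE: "f ` E = E'"
    using b unfolding bij_betw_def by blast
  have SE: "S \<subseteq> E"
    using separator_subset[OF s] .
  show "f ` S \<subseteq> E'"
    using SE fE by blast
  fix X' Y' assume X': "X' \<subseteq> f ` S" and Y': "Y' \<subseteq> E' - f ` S"
  define X where "X = {x \<in> S. f x \<in> X'}"
  define Y where "Y = {x \<in> E - S. f x \<in> Y'}"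
  have XS: "X \<subseteq> S"
    unfolding X_def by blast
  have YS: "Y \<subseteq> E - S"
    unfolding Y_def by blast
  have fX: "f ` X = X'"
    unfolding X_def using X' by blast
  have fY: "f ` Y = Y'"
  proof
    show "f ` Y \<subseteq> Y'"
      unfolding Y_def by blast
    show "Y' \<subseteq> f ` Y"
    proof
      fix y assume y: "y \<in> Y'"
      then have "y \<in> E'" "y \<notin> f ` S"
        using Y' by auto
      then obtain x where "x \<in> E" "f x = y"
        using fE by blast
      then show "y \<in> f ` Y"
        unfolding Y_def using y \<open>y \<notin> f ` S\<close> by blast
    qed
  qed
  have XE: "X \<subseteq> E"
    using XS SE by blast
  have YE: "Y \<subseteq> E"
    using YS by blast
  have cY: "card Y' = card Y"
    using card_image[OF inj_on_subset[OF inj YE]] fY by simp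
  have r1: "mrank I' X' = mrank I X"
    using rank_iso_map[OF M M' f XE] fX by simp
  have r2: "mrank I' (f ` S \<union> Y') = mrank I (S \<union> Y)"
    using rank_iso_map[OF M M' f, of "S \<union> Y"] SE YE fY by (simp add: image_Un)
  have r3: "mrank I' (X' \<union> Y') = mrank I (X \<union> Y)"
    using rank_iso_map[OF M M' f, of "X \<union> Y"] XE YE fX fY by (simp add: image_Un)
  show "min (mrank I' X' + card Y') (mrank I' (f ` S \<union> Y')) \<le> mrank I' (X' \<union> Y')"
    unfolding r1 r2 r3 cY using separatorD[OF s XS YS] .
qed

lemma irreducible_iso_map:
  assumes M: "matroid E I" and M': "matroid E' I'" and f: "iso_map f E I E' I'"
    and irr: "irreducible_matroid E I"
  shows "irreducible_matroid E' I'"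
  unfolding irreducible_iff_separators
proof (intro conjI allI impI M')
  have b: "bij_betw f E E'"
    using iso_map_bij[OF f] .
  have fE: "f ` E = E'"
    using b unfolding bij_betw_def by blast
  have ne: "E \<noteq> {}" and H: "\<And>S. separator E I S \<Longrightarrow> S = {} \<or> S = E"
    using irr unfolding irreducible_iff_separators by blast+
  show "E' \<noteq> {}"
    using ne fE by blast
  fix S' assume s: "separator E' I' S'"
  let ?g = "inv_into E f"
  have g: "iso_map ?g E' I' E I"
    using iso_map_inv[OF f] .
  have "separator E I (?g ` S')"
    using separator_iso_map[OF M' M g s] .
  then have o: "?g ` S' = {} \<or> ?g ` S' = E"
    using H by blast
  have S'E: "S' \<subseteq> E'"
    using separator_subset[OF s] .
  have c: "f ` (?g ` S') = S'"
    using image_inv_into_cancel[of f E E' S'] fE S'E by blast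
  show "S' = {} \<or> S' = E'"
    using o c fE by auto
qed

lemma iso_map_restriction:
  assumes f: "iso_map f E I E' I'" and S: "S \<subseteq> E"
  shows "iso_map f S (restriction I S) (f ` S) (restriction I' (f ` S))"
  unfolding iso_map_def
proof (intro conjI allI impI)
  have b: "bij_betw f E E'"
    using iso_map_bij[OF f] .
  show "bij_betw f S (f ` S)"
    using bij_betw_subset[OF b S] by (simp add: bij_betw_def)
  fix X assume X: "X \<subseteq> S"
  have XE: "X \<subseteq> E"
    using X S by blast
  show "X \<in> restriction I S \<longleftrightarrow> f ` X \<in> restriction I' (f ` S)"
    unfolding mem_restriction using iso_mapD[OF f XE] X by blast
qed

lemma iso_map_contraction:
  assumes M: "matroid E I" and M': "matroid E' I'" and f: "iso_map f E I E' I'" and S: "S \<subseteq> E"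
  shows "iso_map f (E - S) (contraction E I S) (E' - f ` S) (contraction E' I' (f ` S))"
  unfolding iso_map_def
proof (intro conjI allI impI)
  have b: "bij_betw f E E'"
    using iso_map_bij[OF f] .
  have inj: "inj_on f E"
    using b unfolding bij_betw_def by blast
  have fE: "f ` E = E'"
    using b unfolding bij_betw_def by blast
  have e: "f ` (E - S) = E' - f ` S"
    using inj_on_image_set_diff[OF inj _ S] fE by blast
  show "bij_betw f (E - S) (E' - f ` S)"
    using e inj_on_subset[OF inj] unfolding bij_betw_def by blast
  fix Y assume Y: "Y \<subseteq> E - S"
  have YE: "Y \<subseteq> E"
    using Y by blast
  have fY: "f ` Y \<subseteq> E' - f ` S"
    using e Y by blast
  have c: "card (f ` Y) = card Y"
    using card_image[OF inj_on_subset[OF inj YE]] .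
  have r1: "mrank I' (f ` Y \<union> f ` S) = mrank I (Y \<union> S)"
    using rank_iso_map[OF M M' f, of "Y \<union> S"] YE S by (simp add: image_Un)
  have r2: "mrank I' (f ` S) = mrank I S"
    using rank_iso_map[OF M M' f S] .
  show "Y \<in> contraction E I S \<longleftrightarrow> f ` Y \<in> contraction E' I' (f ` S)"
    unfolding contraction_def using Y fY c r1 r2 by simp
qed

lemma iso_map_free_product:
  assumes MA: "matroid S A" and MB: "matroid T B" and d: "S \<inter> T = {}"
    and MA': "matroid S' A'" and MB': "matroid T' B'" and d': "S' \<inter> T' = {}"
    and f: "iso_map f S A S' A'" and g: "iso_map g T B T' B'"
  shows "iso_map (\<lambda>x. if x \<in> S then f x else g x)
    (S \<union> T) (free_product S A T B) (S' \<union> T') (free_product S' A' T' B')"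
  unfolding iso_map_def
proof (intro conjI allI impI)
  let ?h = "\<lambda>x. if x \<in> S then f x else g x"
  have bf: "bij_betw f S S'"
    using iso_map_bij[OF f] .
  have bg: "bij_betw g T T'"
    using iso_map_bij[OF g] .
  have fS: "f ` S = S'" and gT: "g ` T = T'"
    using bf bg unfolding bij_betw_def by blast+
  have bh1: "bij_betw ?h S S'"
    using bf by (rule bij_betw_cong[THEN iffD1, rotated]) simp
  have bh2: "bij_betw ?h T T'"
    using bg d by (intro bij_betw_cong[THEN iffD1, OF _ bg]) auto
  show bh: "bij_betw ?h (S \<union> T) (S' \<union> T')"
    using bij_betw_combine[OF bh1 bh2 d'] .
  fix X assume X: "X \<subseteq> S \<union> T"
  have card_hX: "card (?h ` X) = card X"
    using card_image[OF inj_on_subset[OF bij_betw_imp_inj_on[OF bh] X]] .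
  have hX: "?h ` X = f ` (X \<inter> S) \<union> g ` (X \<inter> T)"
    using X d by auto
  have f1: "f ` (X \<inter> S) \<subseteq> S'"
    using fS by blast
  have g1: "g ` (X \<inter> T) \<subseteq> T'"
    using gT by blast
  have e1: "?h ` X \<inter> S' = f ` (X \<inter> S)"
    unfolding hX using f1 g1 d' by blast
  have e2: "?h ` X \<inter> T' = g ` (X \<inter> T)"
    unfolding hX using f1 g1 d' by blast
  have sub: "?h ` X \<subseteq> S' \<union> T'"
    unfolding hX using f1 g1 by blast
  have XS: "X \<inter> S \<subseteq> S" and XT: "X \<inter> T \<subseteq> T"
    by auto
  have r1: "mrank A' S' = mrank A S"
    using rank_iso_map[OF MA MA' f, of S] fS by simp
  have r2: "mrank B' (g ` (X \<inter> T)) = mrank B (X \<inter> T)"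
    using rank_iso_map[OF MB MB' g XT] .
  have i1: "X \<inter> S \<in> A \<longleftrightarrow> f ` (X \<inter> S) \<in> A'"
    using iso_mapD[OF f XS] .
  show "X \<in> free_product S A T B \<longleftrightarrow> ?h ` X \<in> free_product S' A' T' B'"
    unfolding free_product_iff[OF MA MB d] free_product_iff[OF MA' MB' d'] e1 e2 card_hX r1 r2 i1
    using X sub by blast
qed

lemma iso_map_image:
  assumes M: "matroid E I" and inj: "inj_on f E"
  shows "iso_map f E I (f ` E) ((`) f ` I)"
  unfolding iso_map_def
proof (intro conjI allI impI)
  show "bij_betw f E (f ` E)"
    using inj by (simp add: bij_betw_def)
  fix X assume X: "X \<subseteq> E"
  show "X \<in> I \<longleftrightarrow> f ` X \<in> (`) f ` I"
  proof
    assume "f ` X \<in> (`) f ` I"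
    then obtain Y where Y: "Y \<in> I" "f ` X = f ` Y"
      by blast
    have "Y \<subseteq> E"
      using indep_subset_ground[OF M Y(1)] .
    then have "X = Y"
      using inj_on_image_eq_iff[OF inj X] Y(2) by blast
    then show "X \<in> I"
      using Y by simp
  next
    assume "X \<in> I"
    then show "f ` X \<in> (`) f ` I"
      by (rule imageI)
  qed
qed

lemma matroid_image:
  assumes M: "matroid E I" and inj: "inj_on f E"
  shows "matroid (f ` E) ((`) f ` I)"
  unfolding matroid_def
proof (intro conjI allI impI ballI)
  show "finite (f ` E)"
    using finite_ground[OF M] by simp
  have "f ` {} = {}"
    by simp
  then show "{} \<in> (`) f ` I"
    using empty_indep[OF M] by (metis image_eqI)
next
  fix X assume "X \<in> (`) f ` I"
  then obtain Z where Z: "Z \<in> I" "X = f ` Z"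
    by blast
  then show "X \<subseteq> f ` E"
    using indep_subset_ground[OF M Z(1)] by blast
next
  fix X Y assume a: "Y \<in> (`) f ` I \<and> X \<subseteq> Y"
  then obtain Y0 where Y0: "Y0 \<in> I" "Y = f ` Y0"
    by blast
  define X0 where "X0 = {x \<in> Y0. f x \<in> X}"
  have XY: "X \<subseteq> f ` Y0"
    using a Y0(2) by blast
  have "f ` X0 = X"
    unfolding X0_def using XY by blast
  moreover have "X0 \<subseteq> Y0"
    unfolding X0_def by blast
  then have "X0 \<in> I"
    using indep_subset[OF M Y0(1)] by blast
  ultimately show "X \<in> (`) f ` I"
    by (metis image_eqI)
next
  fix X Y assume a: "X \<in> (`) f ` I \<and> Y \<in> (`) f ` I \<and> card X < card Y"
  then obtain X0 Y0 where X0: "X0 \<in> I" "X = f ` X0" and Y0: "Y0 \<in> I" "Y = f ` Y0"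
    by blast
  have X0E: "X0 \<subseteq> E"
    using indep_subset_ground[OF M X0(1)] .
  have Y0E: "Y0 \<subseteq> E"
    using indep_subset_ground[OF M Y0(1)] .
  have "card X = card X0"
    using X0(2) card_image[OF inj_on_subset[OF inj X0E]] by simp
  moreover have "card Y = card Y0"
    using Y0(2) card_image[OF inj_on_subset[OF inj Y0E]] by simp
  ultimately have "card X0 < card Y0"
    using a by simp
  then obtain y where y: "y \<in> Y0 - X0" "insert y X0 \<in> I"
    using indep_augment[OF M X0(1) Y0(1)] by blast
  have yE: "y \<in> E"
    using y Y0E by blast
  have "f y \<notin> f ` X0"
    using inj_on_image_mem_iff[OF inj yE X0E] y(1) by blast
  then have "f y \<notin> X"
    using X0(2) by simp
  moreover have "f y \<in> Y"
    using y Y0(2) by blast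
  moreover have "insert (f y) X = f ` (insert y X0)"
    using X0(2) by simp
  moreover have "insert (f y) X \<in> (`) f ` I"
    using \<open>insert (f y) X = f ` (insert y X0)\<close> y(2) by (metis image_eqI)
  ultimately show "\<exists>y\<in>Y - X. insert y X \<in> (`) f ` I"
    by blast
qed

lemma matroid_iso_refl: "matroid_iso x x"
  unfolding matroid_iso_def by (intro exI[of _ id]) simp

lemma matroid_iso_sym: "matroid_iso x y \<Longrightarrow> matroid_iso y x"
  using iso_map_inv[of _ "fst x" "snd x" "fst y" "snd y"] unfolding matroid_iso_def iso_map_def[symmetric]
  by blast

lemma matroid_iso_trans: "matroid_iso x y \<Longrightarrow> matroid_iso y z \<Longrightarrow> matroid_iso x z"
  using iso_map_comp[of _ "fst x" "snd x" "fst y" "snd y" _ "fst z" "snd z"]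
  unfolding matroid_iso_def iso_map_def[symmetric] by blast

section \<open>Irreducible factors\<close>

lemma minimal_separator_irreducible:
  assumes M: "matroid E I" and s: "separator E I S" and ne: "S \<noteq> {}"
    and minimal: "\<And>S'. separator E I S' \<Longrightarrow> S' \<noteq> {} \<Longrightarrow> card S \<le> card S'"
  shows "irreducible_matroid S (restriction I S)"
  unfolding irreducible_iff_separators
proof (intro conjI allI impI)
  have SE: "S \<subseteq> E"
    using separator_subset[OF s] .
  then show "matroid S (restriction I S)"
    by (rule matroid_restriction[OF M])
  show "S \<noteq> {}"
    by (fact ne)
  fix S1 assume s1: "separator S (restriction I S) S1"
  then have "S1 \<subseteq> S"
    by (rule separator_subset)
  moreover have "S1 \<noteq> {} \<Longrightarrow> card S \<le> card S1"
    using minimal separator_trans[OF M s s1] by blast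
  moreover have "finite S"
    using finite_subset_ground[OF M SE] .
  ultimately show "S1 = {} \<or> S1 = S"
    using card_subset_eq card_mono by (metis le_antisym)
qed

lemma exists_irreducible_separator:
  assumes M: "matroid E I" and ne: "E \<noteq> {}"
  obtains S where "separator E I S" "irreducible_matroid S (restriction I S)"
proof -
  obtain S where "separator E I S \<and> S \<noteq> {}"
    and minimal: "\<And>S'. separator E I S' \<and> S' \<noteq> {} \<Longrightarrow> card S \<le> card S'"
    using ex_has_least_nat[of "\<lambda>S. separator E I S \<and> S \<noteq> {}" E card] separator_ground ne by blast
  then show thesis
    using that minimal_separator_irreducible[OF M] by blast
qed

lemma irreducible_separators_disjoint:
  assumes M: "matroid E I" and s1: "separator E I S" and s2: "separator E I S'"
    and i1: "irreducible_matroid S (restriction I S)" and i2: "irreducible_matroid S' (restriction I S')"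
    and neq: "S \<noteq> S'"
  shows "S \<inter> S' = {}"
proof -
  have "separator S (restriction I S) (S \<inter> S')"
    using separator_restriction[OF M s2 separator_subset[OF s1]] .
  then have "S \<inter> S' = {} \<or> S \<inter> S' = S"
    using i1 unfolding irreducible_iff_separators by blast
  moreover have "separator S' (restriction I S') (S' \<inter> S)"
    using separator_restriction[OF M s1 separator_subset[OF s2]] .
  then have "S' \<inter> S = {} \<or> S' \<inter> S = S'"
    using i2 unfolding irreducible_iff_separators by blast
  ultimately show ?thesis
    using neq by blast
qed

text \<open>On the union of two disjoint separators with irreducible restrictions, both sets are
  complementary separators of the restriction, which is therefore uniform; an irreducible
  uniform matroid has a single element.\<close>

lemma disjoint_irreducible_separators_singletons:
  assumes M: "matroid E I" and s1: "separator E I S" and s2: "separator E I S'"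
    and i1: "irreducible_matroid S (restriction I S)" and i2: "irreducible_matroid S' (restriction I S')"
    and disj: "S \<inter> S' = {}"
  obtains s s' where "S = {s}" "S' = {s'}"
    "\<And>Z. Z \<subseteq> {s, s'} \<Longrightarrow> mrank I Z = min (card Z) (mrank I {s, s'})"
proof -
  define U where "U = S \<union> S'"
  have SE: "S \<subseteq> E" and S'E: "S' \<subseteq> E"
    using separator_subset s1 s2 by blast+
  then have UE: "U \<subseteq> E"
    unfolding U_def by blast
  have "U \<inter> S = S" "U \<inter> S' = U - S"
    using disj unfolding U_def by blast+
  then have sep: "separator U (restriction I U) S" "separator U (restriction I U) (U - S)"
    using separator_restriction[OF M s1 UE] separator_restriction[OF M s2 UE] by simp_all
  have "S \<noteq> {}" "S' \<noteq> {}"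
    using i1 i2 by (simp_all add: irreducible_matroid_def)
  then have ne: "S \<noteq> {}" "U - S \<noteq> {}"
    using disj unfolding U_def by blast+
  have unif: "mrank (restriction I U) Z = min (card Z) (mrank (restriction I U) U)"
    if "Z \<subseteq> U" for Z
    using complementary_separators_uniform[OF matroid_restriction[OF M UE] sep ne that] .
  have unif_I: "mrank I Z = min (card Z) (mrank I U)" if "Z \<subseteq> U" for Z
    using unif[OF that] that by (simp add: rank_restriction)
  have "mrank (restriction I S) Z = min (card Z) (mrank I U)" if "Z \<subseteq> S" for Z
    using unif_I[of Z] rank_restriction[OF that, of I] that by (auto simp: U_def)
  then obtain s where s: "S = {s}"
    using irreducible_uniform_singleton[OF i1] by blast
  have "mrank (restriction I S') Z = min (card Z) (mrank I U)" if "Z \<subseteq> S'" for Z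
    using unif_I[of Z] rank_restriction[OF that, of I] that by (auto simp: U_def)
  then obtain s' where s': "S' = {s'}"
    using irreducible_uniform_singleton[OF i2] by blast
  have "U = {s, s'}"
    unfolding U_def s s' by blast
  then have "mrank I Z = min (card Z) (mrank I {s, s'})" if "Z \<subseteq> {s, s'}" for Z
    using unif_I[of Z] that by simp
  then show thesis
    using that s s' by blast
qed

lemma transpose_automorphism:
  assumes M: "matroid E I" and sU: "separator E I {s, s'}"
    and unif: "\<And>Z. Z \<subseteq> {s, s'} \<Longrightarrow> mrank I Z = min (card Z) R"
  shows "iso_map (transpose s s') E I E I"
  unfolding iso_map_def
proof (intro conjI allI impI)
  let ?\<tau> = "transpose s s'" and ?U = "{s, s'}"
  have UE: "?U \<subseteq> E"
    using separator_subset[OF sU] .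
  then show "bij_betw ?\<tau> E E"
    by simp
  have indep_U: "Z \<in> I \<longleftrightarrow> card Z \<le> R" if "Z \<subseteq> ?U" for Z
  proof -
    have "Z \<subseteq> E"
      using that UE by blast
    then show ?thesis
      using indep_iff_rank[OF M, of Z] unif[OF that] by (simp add: min_def)
  qed
  fix X assume X: "X \<subseteq> E"
  have "?\<tau> ` ?U = ?U" "?\<tau> ` E = E"
    using UE by (simp_all add: insert_commute)
  then have in_U: "?\<tau> ` X \<inter> ?U = ?\<tau> ` (X \<inter> ?U)" and \<tau>X: "?\<tau> ` X \<subseteq> E"
    using X by (auto simp: image_Int[OF inj_transpose])
  have "?\<tau> ` X - ?U = ?\<tau> ` X - ?\<tau> ` ?U"
    using \<open>?\<tau> ` ?U = ?U\<close> by (simp only:)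
  also have "\<dots> = ?\<tau> ` (X - ?U)"
    by (rule image_set_diff[OF inj_transpose, symmetric])
  also have "\<dots> = X - ?U"
    by (rule image_cong[of _ _ _ id, simplified]) auto
  finally have out_U: "?\<tau> ` X - ?U = X - ?U" .
  have card_\<tau>: "card (?\<tau> ` Z) = card Z" for Z
    by (simp add: card_image)
  have "?\<tau> ` (X \<inter> ?U) \<subseteq> ?U"
    using \<open>?\<tau> ` ?U = ?U\<close> by blast
  have "X \<in> I \<longleftrightarrow> card (X \<inter> ?U) \<le> R \<and> card X \<le> mrank I (?U \<union> (X - ?U))"
    using separator_indep_iff[OF M sU X] indep_U[of "X \<inter> ?U"] by blast
  also have "\<dots> \<longleftrightarrow> ?\<tau> ` X \<in> I"
    using separator_indep_iff[OF M sU \<tau>X] indep_U[OF \<open>?\<tau> ` (X \<inter> ?U) \<subseteq> ?U\<close>]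
    unfolding in_U out_U card_\<tau> by blast
  finally show "X \<in> I \<longleftrightarrow> ?\<tau> ` X \<in> I" .
qed

lemma irreducible_separators_conjugate:
  assumes M: "matroid E I" and s1: "separator E I S" and s2: "separator E I S'"
    and i1: "irreducible_matroid S (restriction I S)" and i2: "irreducible_matroid S' (restriction I S')"
  obtains \<sigma> where "iso_map \<sigma> E I E I" "\<sigma> ` S = S'"
proof (cases "S = S'")
  case True
  show thesis
    by (rule that[of id]) (simp_all add: iso_map_def True)
next
  case False
  then have "S \<inter> S' = {}"
    by (rule irreducible_separators_disjoint[OF assms])
  then show thesis
  proof (rule disjoint_irreducible_separators_singletons[OF assms])
    fix s s' assume S: "S = {s}" "S' = {s'}"
      and unif: "\<And>Z. Z \<subseteq> {s, s'} \<Longrightarrow> mrank I Z = min (card Z) (mrank I {s, s'})"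
    have "separator E I {s, s'}"
      using separator_Un[OF M s1 s2] unfolding S by (simp add: insert_commute)
    then have "iso_map (transpose s s') E I E I"
      by (rule transpose_automorphism[OF M _ unif])
    moreover have "transpose s s' ` S = S'"
      unfolding S by simp
    ultimately show thesis
      by (rule that)
  qed
qed

lemma irreducible_factor_unique:
  assumes M: "matroid E I" and M': "matroid E' I'" and h: "iso_map h E I E' I'"
    and s: "separator E I S" and s': "separator E' I' S'"
    and i: "irreducible_matroid S (restriction I S)" and i': "irreducible_matroid S' (restriction I' S')"
  obtains g where "iso_map g E I E' I'" "g ` S = S'"
proof -
  let ?h' = "inv_into E h"
  have h': "iso_map ?h' E' I' E I"
    using iso_map_inv[OF h] .
  have S'E': "S' \<subseteq> E'"
    using separator_subset[OF s'] .
  have bij: "bij_betw h E E'"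
    using iso_map_bij[OF h] .
  define S1 where "S1 = ?h' ` S'"
  have S1E: "S1 \<subseteq> E"
    unfolding S1_def using S'E' bij by (metis bij_betw_imp_surj_on bij_betw_inv_into image_mono)
  have hS1: "h ` S1 = S'"
    unfolding S1_def using S'E' bij by (simp add: bij_betw_def image_inv_into_cancel)
  have s1: "separator E I S1"
    unfolding S1_def using separator_iso_map[OF M' M h' s'] .
  have "iso_map ?h' S' (restriction I' S') S1 (restriction I S1)"
    unfolding S1_def using iso_map_restriction[OF h' S'E'] .
  then have i1: "irreducible_matroid S1 (restriction I S1)"
    using irreducible_iso_map[OF matroid_restriction[OF M' S'E'] matroid_restriction[OF M S1E]] i'
    by blast
  obtain \<sigma> where \<sigma>: "iso_map \<sigma> E I E I" "\<sigma> ` S = S1"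
    using irreducible_separators_conjugate[OF M s s1 i i1] .
  have "iso_map (h \<circ> \<sigma>) E I E' I'"
    using iso_map_comp[OF \<sigma>(1) h] .
  moreover have "(h \<circ> \<sigma>) ` S = S'"
    using \<sigma>(2) hS1 by (metis image_comp)
  ultimately show thesis
    by (rule that)
qed

section \<open>Matroids on initial segments of the naturals\<close>

definition matroids_on :: "nat \<Rightarrow> (nat set \<times> nat set set) set" where
  "matroids_on n = {(E, I). E = {0..<n} \<and> matroid E I}"

definition irreducibles_on :: "nat \<Rightarrow> (nat set \<times> nat set set) set" where
  "irreducibles_on n = {(E, I). E = {0..<n} \<and> irreducible_matroid E I}"

definition shift_indep :: "nat \<Rightarrow> nat set set \<Rightarrow> nat set set" where
  "shift_indep k B = (`) (\<lambda>x. x + k) ` B"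

definition fp_concat :: "nat \<Rightarrow> nat \<Rightarrow> nat set set \<Rightarrow> nat set set \<Rightarrow> nat set set" where
  "fp_concat n k A B = free_product {0..<k} A {k..<n} (shift_indep k B)"

lemma mem_matroids_on: "x \<in> matroids_on n \<longleftrightarrow> fst x = {0..<n} \<and> matroid (fst x) (snd x)"
  unfolding matroids_on_def by (cases x) auto

lemma mem_irreducibles_on: "x \<in> irreducibles_on n \<longleftrightarrow> fst x = {0..<n} \<and> irreducible_matroid (fst x) (snd x)"
  unfolding irreducibles_on_def by (cases x) auto

lemma irreducibles_on_subset: "irreducibles_on n \<subseteq> matroids_on n"
  unfolding irreducibles_on_def matroids_on_def using irreducible_imp_matroid by auto

lemma finite_matroids_on: "finite (matroids_on n)"
proof -
  have "matroids_on n \<subseteq> {{0..<n}} \<times> Pow (Pow {0..<n})"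
    unfolding matroids_on_def using indep_subset_ground by fastforce
  then show ?thesis
    by (rule finite_subset) simp
qed

lemma finite_irreducibles_on: "finite (irreducibles_on n)"
  using finite_subset[OF irreducibles_on_subset finite_matroids_on] .

lemma
  assumes "matroid {0..<n - k} B" and "k \<le> n"
  shows matroid_shift_indep: "matroid {k..<n} (shift_indep k B)"
    and iso_map_shift_indep: "iso_map (\<lambda>x. x + k) {0..<n - k} B {k..<n} (shift_indep k B)"
proof -
  have inj: "inj_on (\<lambda>x. x + k) {0..<n - k}"
    by (simp add: inj_on_def)
  have img: "(\<lambda>x. x + k) ` {0..<n - k} = {k..<n}"
    using assms(2) by (simp add: add.commute)
  show "matroid {k..<n} (shift_indep k B)"
    using matroid_image[OF assms(1) inj] unfolding img shift_indep_def .
  show "iso_map (\<lambda>x. x + k) {0..<n - k} B {k..<n} (shift_indep k B)"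
    using iso_map_image[OF assms(1) inj] unfolding img shift_indep_def .
qed

lemma
  assumes MA: "matroid {0..<k} A" and MB: "matroid {0..<n - k} B" and kn: "k \<le> n"
  shows matroid_fp_concat: "matroid {0..<n} (fp_concat n k A B)"
    and rank_fp_concat: "mrank (fp_concat n k A B) {0..<n} = mrank A {0..<k} + mrank B {0..<n - k}"
    and separator_fp_concat: "separator {0..<n} (fp_concat n k A B) {0..<k}"
    and restriction_fp_concat: "restriction (fp_concat n k A B) {0..<k} = A"
    and contraction_fp_concat: "contraction {0..<n} (fp_concat n k A B) {0..<k} = shift_indep k B"
proof -
  note MB' = matroid_shift_indep[OF MB kn]
  have d: "{0..<k} \<inter> {k..<n} = {}"
    by auto
  have u: "{0..<k} \<union> {k..<n} = {0..<n}"
    using kn by auto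
  show "matroid {0..<n} (fp_concat n k A B)"
    using matroid_free_product[OF MA MB' d] unfolding fp_concat_def u .
  show "separator {0..<n} (fp_concat n k A B) {0..<k}"
    using separator_free_product[OF MA MB' d] unfolding fp_concat_def u .
  show "restriction (fp_concat n k A B) {0..<k} = A"
    using restriction_free_product[OF MA MB' d] unfolding fp_concat_def .
  show "contraction {0..<n} (fp_concat n k A B) {0..<k} = shift_indep k B"
    using contraction_free_product[OF MA MB' d] unfolding fp_concat_def u .
  have "mrank (shift_indep k B) {k..<n} = mrank B {0..<n - k}"
    using rank_iso_map[OF MB MB' iso_map_shift_indep[OF MB kn], of "{0..<n - k}"] kn by simp
  then show "mrank (fp_concat n k A B) {0..<n} = mrank A {0..<k} + mrank B {0..<n - k}"
    using rank_free_product_left_Un[OF MA MB' d, of "{k..<n}"] unfolding fp_concat_def u by simp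
qed

lemma fp_concat_iso:
  assumes MA: "matroid {0..<k} A" and MB: "matroid {0..<n - k} B" and kn: "k \<le> n"
    and MA': "matroid {0..<k} A'" and MB': "matroid {0..<n - k} B'"
    and f: "iso_map f {0..<k} A {0..<k} A'" and g: "iso_map g {0..<n - k} B {0..<n - k} B'"
  shows "matroid_iso ({0..<n}, fp_concat n k A B) ({0..<n}, fp_concat n k A' B')"
proof -
  let ?shift = "\<lambda>x. x + k"
  have g_shifted: "iso_map (?shift \<circ> g \<circ> inv_into {0..<n - k} ?shift)
      {k..<n} (shift_indep k B) {k..<n} (shift_indep k B')"
    using iso_map_comp[OF iso_map_comp[OF iso_map_inv[OF iso_map_shift_indep[OF MB kn]] g]
        iso_map_shift_indep[OF MB' kn]]
    by (simp add: comp_assoc)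
  have d: "{0..<k} \<inter> {k..<n} = {}"
    by auto
  have u: "{0..<k} \<union> {k..<n} = {0..<n}"
    using kn by auto
  show ?thesis
    using iso_map_free_product[OF MA matroid_shift_indep[OF MB kn] d MA' matroid_shift_indep[OF MB' kn] d f g_shifted]
    unfolding matroid_iso_iff_iso_map fp_concat_def u by blast
qed

lemma fp_concat_iso_cancel:
  assumes IA: "irreducible_matroid {0..<k} A" and MB: "matroid {0..<n - k} B" and kn: "k \<le> n"
    and IA': "irreducible_matroid {0..<k'} A'" and MB': "matroid {0..<n - k'} B'" and kn': "k' \<le> n"
    and iso: "matroid_iso ({0..<n}, fp_concat n k A B) ({0..<n}, fp_concat n k' A' B')"
  shows "k = k'" and "matroid_iso ({0..<k}, A) ({0..<k'}, A')"
    and "matroid_iso ({0..<n - k}, B) ({0..<n - k'}, B')"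
proof -
  let ?E = "{0..<n}"
  have MA: "matroid {0..<k} A" and MA': "matroid {0..<k'} A'"
    using IA IA' by (simp_all add: irreducible_imp_matroid)
  let ?K = "fp_concat n k A B" and ?K' = "fp_concat n k' A' B'"
  have M: "matroid ?E ?K" and M': "matroid ?E ?K'"
    using matroid_fp_concat MA MB kn MA' MB' kn' by blast+
  obtain h where "iso_map h ?E ?K ?E ?K'"
    using iso unfolding matroid_iso_iff_iso_map by blast
  then obtain g where g: "iso_map g ?E ?K ?E ?K'" and gk: "g ` {0..<k} = {0..<k'}"
    using irreducible_factor_unique[OF M M' _ separator_fp_concat[OF MA MB kn] separator_fp_concat[OF MA' MB' kn']]
      IA IA' restriction_fp_concat[OF MA MB kn] restriction_fp_concat[OF MA' MB' kn'] by metis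
  have iA: "iso_map g {0..<k} A {0..<k'} A'"
    using iso_map_restriction[OF g, of "{0..<k}"] kn gk
      restriction_fp_concat[OF MA MB kn] restriction_fp_concat[OF MA' MB' kn'] by simp
  then show "matroid_iso ({0..<k}, A) ({0..<k'}, A')"
    unfolding matroid_iso_iff_iso_map by blast
  show kk: "k = k'"
    using bij_betw_same_card[OF iso_map_bij[OF iA]] by simp
  have "?E - {0..<k} = {k..<n}" "?E - {0..<k'} = {k..<n}"
    using kk by auto
  then have "iso_map g {k..<n} (shift_indep k B) {k..<n} (shift_indep k B')"
    using iso_map_contraction[OF M M' g, of "{0..<k}"] kn gk kk
      contraction_fp_concat[OF MA MB kn] contraction_fp_concat[OF MA' MB' kn'] by simp
  then have "matroid_iso ({k..<n}, shift_indep k B) ({k..<n}, shift_indep k B')"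
    unfolding matroid_iso_iff_iso_map by blast
  moreover have "matroid_iso ({0..<n - k}, B) ({k..<n}, shift_indep k B)"
    "matroid_iso ({0..<n - k}, B') ({k..<n}, shift_indep k B')"
    using iso_map_shift_indep MB MB' kn kk unfolding matroid_iso_iff_iso_map by blast+
  ultimately show "matroid_iso ({0..<n - k}, B) ({0..<n - k'}, B')"
    using kk matroid_iso_trans matroid_iso_sym by metis
qed

lemma matroid_relabel:
  assumes M: "matroid S I" and "finite T" and "card S = card T"
  obtains J p where "matroid T J" "iso_map p S I T J"
proof -
  obtain p where "bij_betw p S T"
    using finite_same_card_bij[OF finite_ground[OF M] assms(2,3)] by blast
  then have inj: "inj_on p S" and img: "p ` S = T"
    by (auto simp: bij_betw_def)
  show thesis
    using that matroid_image[OF M inj] iso_map_image[OF M inj] unfolding img by blast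
qed

lemma fp_concat_surj:
  assumes M: "matroid {0..<n} I" and n: "0 < n"
  obtains k A B where "1 \<le> k" "k \<le> n" "irreducible_matroid {0..<k} A" "matroid {0..<n - k} B"
    "matroid_iso ({0..<n}, I) ({0..<n}, fp_concat n k A B)"
proof -
  let ?E = "{0..<n}"
  have "?E \<noteq> {}"
    using n by simp
  then obtain S where s: "separator ?E I S" and irr: "irreducible_matroid S (restriction I S)"
    by (rule exists_irreducible_separator[OF M])
  have SE: "S \<subseteq> ?E"
    using separator_subset[OF s] .
  define k where "k = card S"
  have fin: "finite S"
    using finite_subset[OF SE] by simp
  have "S \<noteq> {}"
    using irr by (simp add: irreducible_matroid_def)
  then have k1: "1 \<le> k"
    unfolding k_def using fin by (simp add: Suc_le_eq card_gt_0_iff)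
  have kn: "k \<le> n"
    unfolding k_def using card_mono[OF finite_atLeastLessThan SE] by simp
  have card_ES: "card (?E - S) = card {0..<n - k}"
    unfolding k_def using card_Diff_subset[OF fin SE] by simp
  note MR = matroid_restriction[OF M SE] and MC = matroid_contraction[OF M SE]
  have "card S = card {0..<k}"
    by (simp add: k_def)
  then obtain A p where MA: "matroid {0..<k} A" and iA: "iso_map p S (restriction I S) {0..<k} A"
    by (rule matroid_relabel[OF MR finite_atLeastLessThan])
  obtain B q where MB: "matroid {0..<n - k} B" and iB: "iso_map q (?E - S) (contraction ?E I S) {0..<n - k} B"
    using card_ES by (rule matroid_relabel[OF MC finite_atLeastLessThan])
  have iC: "iso_map ((\<lambda>x. x + k) \<circ> q) (?E - S) (contraction ?E I S) {k..<n} (shift_indep k B)"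
    using iso_map_comp[OF iB iso_map_shift_indep[OF MB kn]] .
  have d: "S \<inter> (?E - S) = {}" "{0..<k} \<inter> {k..<n} = {}"
    by auto
  have u: "S \<union> (?E - S) = ?E" "{0..<k} \<union> {k..<n} = ?E"
    using SE kn by auto
  have "iso_map (\<lambda>x. if x \<in> S then p x else ((\<lambda>x. x + k) \<circ> q) x) (S \<union> (?E - S))
      (free_product S (restriction I S) (?E - S) (contraction ?E I S)) ({0..<k} \<union> {k..<n})
      (free_product {0..<k} A {k..<n} (shift_indep k B))"
    using iso_map_free_product[OF MR MC d(1) MA matroid_shift_indep[OF MB kn] d(2) iA iC] .
  then have "iso_map (\<lambda>x. if x \<in> S then p x else ((\<lambda>x. x + k) \<circ> q) x) ?E I ?E (fp_concat n k A B)"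
    unfolding u separator_factorization[OF M s] fp_concat_def[of n k A B, symmetric] .
  then have "matroid_iso ({0..<n}, I) ({0..<n}, fp_concat n k A B)"
    unfolding matroid_iso_iff_iso_map by blast
  moreover have "irreducible_matroid {0..<k} A"
    using irreducible_iso_map[OF MR MA iA irr] .
  ultimately show thesis
    using that k1 kn MB by blast
qed

section \<open>Counting isomorphism classes\<close>

definition iso_class :: "nat set \<times> nat set set \<Rightarrow> (nat set \<times> nat set set) set" where
  "iso_class x = iso_rel `` {x}"

lemma iso_rel_equiv: "equiv UNIV iso_rel"
  unfolding equiv_def refl_on_def sym_def trans_def iso_rel_def
  using matroid_iso_refl matroid_iso_sym matroid_iso_trans by auto

lemma iso_class_eq_iff: "iso_class x = iso_class y \<longleftrightarrow> matroid_iso x y"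
  unfolding iso_class_def using equiv_class_eq_iff[OF iso_rel_equiv, of x y]
  unfolding iso_rel_def by simp

lemma num_classes_eq: "num_classes n P = card (iso_class ` {K \<in> matroids_on n. P (fst K) (snd K)})"
proof -
  have "{(E, I). E = {0..<n} \<and> matroid E I \<and> P E I} = {K \<in> matroids_on n. P (fst K) (snd K)}"
    unfolding matroids_on_def by auto
  moreover have "A // iso_rel = iso_class ` A" for A
    unfolding quotient_def iso_class_def by auto
  ultimately show ?thesis
    unfolding num_classes_def by simp
qed

lemma card_image_eq_if_same_fibres:
  assumes "\<And>x y. x \<in> X \<Longrightarrow> y \<in> X \<Longrightarrow> F x = F y \<longleftrightarrow> G x = G y"
  shows "card (F ` X) = card (G ` X)"
proof -
  define h where "h u = G (inv_into X F u)" for u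
  have inv: "inv_into X F u \<in> X" "F (inv_into X F u) = u" if "u \<in> F ` X" for u
    using that by (auto intro: inv_into_into f_inv_into_f)
  have h_F: "h (F x) = G x" if "x \<in> X" for x
    using inv[of "F x"] assms[of "inv_into X F (F x)" x] that unfolding h_def by auto
  have "bij_betw h (F ` X) (G ` X)"
  proof (rule bij_betw_imageI)
    show "inj_on h (F ` X)"
    proof (rule inj_onI)
      fix u v assume "u \<in> F ` X" "v \<in> F ` X" "h u = h v"
      then obtain x y where "x \<in> X" "y \<in> X" "u = F x" "v = F y" "G x = G y"
        using h_F by auto
      then show "u = v"
        using assms by blast
    qed
    show "h ` F ` X = G ` X"
      using h_F by (auto simp: image_image)
  qed
  then show ?thesis
    by (rule bij_betw_same_card)
qed

lemma fp_concat_mem_matroids_on: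
  assumes "a \<in> irreducibles_on k" "b \<in> matroids_on (n - k)" "k \<le> n"
  shows "({0..<n}, fp_concat n k (snd a) (snd b)) \<in> matroids_on n"
  using assms matroid_fp_concat[OF irreducible_imp_matroid] unfolding mem_matroids_on mem_irreducibles_on
  by auto

lemma fp_concat_iso_iff:
  assumes a: "a \<in> irreducibles_on k" and b: "b \<in> matroids_on (n - k)" and kn: "k \<le> n"
    and a': "a' \<in> irreducibles_on k'" and b': "b' \<in> matroids_on (n - k')" and kn': "k' \<le> n"
  shows "matroid_iso ({0..<n}, fp_concat n k (snd a) (snd b)) ({0..<n}, fp_concat n k' (snd a') (snd b'))
    \<longleftrightarrow> k = k' \<and> matroid_iso a a' \<and> matroid_iso b b'"
proof -
  define A B A' B' where defs: "A = snd a" "B = snd b" "A' = snd a'" "B' = snd b'"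
  have ab: "a = ({0..<k}, A)" "b = ({0..<n - k}, B)" "a' = ({0..<k'}, A')" "b' = ({0..<n - k'}, B')"
    using a b a' b' unfolding mem_irreducibles_on mem_matroids_on defs
    by (simp_all add: prod_eq_iff)
  have IA: "irreducible_matroid {0..<k} A" and MB: "matroid {0..<n - k} B"
    and IA': "irreducible_matroid {0..<k'} A'" and MB': "matroid {0..<n - k'} B'"
    using a b a' b' unfolding ab mem_irreducibles_on mem_matroids_on by auto
  show ?thesis
  proof
    assume "matroid_iso ({0..<n}, fp_concat n k (snd a) (snd b)) ({0..<n}, fp_concat n k' (snd a') (snd b'))"
    then show "k = k' \<and> matroid_iso a a' \<and> matroid_iso b b'"
      using fp_concat_iso_cancel[OF IA MB kn IA' MB' kn'] unfolding ab by simp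
  next
    assume iso: "k = k' \<and> matroid_iso a a' \<and> matroid_iso b b'"
    then obtain f g where "iso_map f {0..<k} A {0..<k} A'" "iso_map g {0..<n - k} B {0..<n - k} B'"
      unfolding ab matroid_iso_iff_iso_map by blast
    then show "matroid_iso ({0..<n}, fp_concat n k (snd a) (snd b)) ({0..<n}, fp_concat n k' (snd a') (snd b'))"
      using fp_concat_iso[OF irreducible_imp_matroid[OF IA] MB kn] irreducible_imp_matroid[OF IA'] MB' iso
      unfolding ab by simp
  qed
qed

definition factor_classes :: "nat \<Rightarrow> nat \<Rightarrow> (nat set \<times> nat set set) set \<Rightarrow> (nat set \<times> nat set set) set
    \<Rightarrow> (nat set \<times> nat set set) set set" where
  "factor_classes n k As Bs = (\<lambda>(a, b). iso_class ({0..<n}, fp_concat n k (snd a) (snd b))) ` (As \<times> Bs)"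

lemma card_factor_classes:
  assumes As: "As \<subseteq> irreducibles_on k" and Bs: "Bs \<subseteq> matroids_on (n - k)" and kn: "k \<le> n"
  shows "card (factor_classes n k As Bs) = card (iso_class ` As) * card (iso_class ` Bs)"
proof -
  define F where "F x = iso_class ({0..<n}, fp_concat n k (snd (fst x)) (snd (snd x)))"
    for x :: "(nat set \<times> nat set set) \<times> (nat set \<times> nat set set)"
  define G where "G x = (iso_class (fst x), iso_class (snd x))"
    for x :: "(nat set \<times> nat set set) \<times> (nat set \<times> nat set set)"
  have "card (F ` (As \<times> Bs)) = card (G ` (As \<times> Bs))"
  proof (rule card_image_eq_if_same_fibres)
    fix x y assume "x \<in> As \<times> Bs" "y \<in> As \<times> Bs"
    then have "fst x \<in> irreducibles_on k" "snd x \<in> matroids_on (n - k)"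
      "fst y \<in> irreducibles_on k" "snd y \<in> matroids_on (n - k)"
      using As Bs by auto
    from fp_concat_iso_iff[OF this(1,2) kn this(3,4) kn]
    show "F x = F y \<longleftrightarrow> G x = G y"
      unfolding F_def G_def by (simp add: iso_class_eq_iff prod_eq_iff)
  qed
  moreover have "factor_classes n k As Bs = F ` (As \<times> Bs)"
    unfolding factor_classes_def F_def by (simp add: case_prod_beta)
  moreover have "G ` (As \<times> Bs) = iso_class ` As \<times> iso_class ` Bs"
    unfolding G_def by force
  ultimately show ?thesis
    by (simp add: card_cartesian_product)
qed

text \<open>The labels \<open>w\<close> sort the factorizations \<open>a \<box> b\<close> of matroids with property \<open>P\<close>:
  a label fixes the size \<open>deg w\<close> of the irreducible factor \<open>a\<close> and, through \<open>PA w\<close> and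
  \<open>PB w\<close>, whatever else \<open>P\<close> depends on (for the rank, the rank of \<open>a\<close>).\<close>

locale factor_decomposition =
  fixes n :: nat and P :: "nat set \<times> nat set set \<Rightarrow> bool" and W :: "'w set" and deg :: "'w \<Rightarrow> nat"
    and PA PB :: "'w \<Rightarrow> nat set \<times> nat set set \<Rightarrow> bool"
  assumes n_pos: "0 < n" and finite_W: "finite W" and deg: "\<And>w. w \<in> W \<Longrightarrow> 1 \<le> deg w \<and> deg w \<le> n"
    and P_iso: "\<And>x y. x \<in> matroids_on n \<Longrightarrow> y \<in> matroids_on n \<Longrightarrow> matroid_iso x y \<Longrightarrow> P x \<longleftrightarrow> P y"
    and PA_iso: "\<And>w x y. w \<in> W \<Longrightarrow> x \<in> irreducibles_on (deg w) \<Longrightarrow> y \<in> irreducibles_on (deg w) \<Longrightarrow>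
      matroid_iso x y \<Longrightarrow> PA w x \<longleftrightarrow> PA w y"
    and PB_iso: "\<And>w x y. w \<in> W \<Longrightarrow> x \<in> matroids_on (n - deg w) \<Longrightarrow> y \<in> matroids_on (n - deg w) \<Longrightarrow>
      matroid_iso x y \<Longrightarrow> PB w x \<longleftrightarrow> PB w y"
    and P_factors: "\<And>k a b. 1 \<le> k \<Longrightarrow> k \<le> n \<Longrightarrow> a \<in> irreducibles_on k \<Longrightarrow> b \<in> matroids_on (n - k) \<Longrightarrow>
      P ({0..<n}, fp_concat n k (snd a) (snd b)) \<longleftrightarrow> (\<exists>w\<in>W. deg w = k \<and> PA w a \<and> PB w b)"
    and factors_unique: "\<And>w w' a b. w \<in> W \<Longrightarrow> w' \<in> W \<Longrightarrow> deg w = deg w' \<Longrightarrow>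
      a \<in> irreducibles_on (deg w) \<Longrightarrow> b \<in> matroids_on (n - deg w) \<Longrightarrow>
      PA w a \<Longrightarrow> PB w b \<Longrightarrow> PA w' a \<Longrightarrow> PB w' b \<Longrightarrow> w = w'"
begin

abbreviation first_factors :: "'w \<Rightarrow> (nat set \<times> nat set set) set" where
  "first_factors w \<equiv> {a \<in> irreducibles_on (deg w). PA w a}"

abbreviation second_factors :: "'w \<Rightarrow> (nat set \<times> nat set set) set" where
  "second_factors w \<equiv> {b \<in> matroids_on (n - deg w). PB w b}"

lemma iso_classes_eq_Union_factor_classes:
  "iso_class ` {K \<in> matroids_on n. P K} = (\<Union>w\<in>W. factor_classes n (deg w) (first_factors w) (second_factors w))"
proof
  show "iso_class ` {K \<in> matroids_on n. P K}
      \<subseteq> (\<Union>w\<in>W. factor_classes n (deg w) (first_factors w) (second_factors w))"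
  proof clarify
    fix K assume K: "K \<in> matroids_on n" "P K"
    then have K_eq: "K = ({0..<n}, snd K)" and "matroid {0..<n} (snd K)"
      unfolding mem_matroids_on by (auto simp: prod_eq_iff)
    then obtain k A B where k: "1 \<le> k" "k \<le> n" and IA: "irreducible_matroid {0..<k} A"
      and MB: "matroid {0..<n - k} B" and iso: "matroid_iso ({0..<n}, snd K) ({0..<n}, fp_concat n k A B)"
      using fp_concat_surj n_pos by blast
    let ?a = "({0..<k}, A)" and ?b = "({0..<n - k}, B)"
    have ab: "?a \<in> irreducibles_on k" "?b \<in> matroids_on (n - k)"
      using IA MB unfolding mem_irreducibles_on mem_matroids_on by simp_all
    have "P ({0..<n}, fp_concat n k (snd ?a) (snd ?b))"
      using P_iso[OF K(1) fp_concat_mem_matroids_on[OF ab k(2)]] iso K(2) K_eq by simp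
    then obtain w where w: "w \<in> W" "deg w = k" "PA w ?a" "PB w ?b"
      using P_factors[OF k ab] by blast
    have "iso_class K = iso_class ({0..<n}, fp_concat n k (snd ?a) (snd ?b))"
      using K_eq iso iso_class_eq_iff by simp
    then have "iso_class K \<in> factor_classes n (deg w) (first_factors w) (second_factors w)"
      unfolding factor_classes_def using w ab by force
    then show "iso_class K \<in> (\<Union>w\<in>W. factor_classes n (deg w) (first_factors w) (second_factors w))"
      using w(1) by blast
  qed
  show "(\<Union>w\<in>W. factor_classes n (deg w) (first_factors w) (second_factors w))
      \<subseteq> iso_class ` {K \<in> matroids_on n. P K}"
  proof
    fix c assume "c \<in> (\<Union>w\<in>W. factor_classes n (deg w) (first_factors w) (second_factors w))"
    then obtain w a b where w: "w \<in> W" and a: "a \<in> irreducibles_on (deg w)" "PA w a"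
      and b: "b \<in> matroids_on (n - deg w)" "PB w b"
      and c: "c = iso_class ({0..<n}, fp_concat n (deg w) (snd a) (snd b))"
      unfolding factor_classes_def by auto
    have "P ({0..<n}, fp_concat n (deg w) (snd a) (snd b))"
      using P_factors[OF _ _ a(1) b(1)] deg[OF w] w a b by blast
    moreover have "({0..<n}, fp_concat n (deg w) (snd a) (snd b)) \<in> matroids_on n"
      using fp_concat_mem_matroids_on[OF a(1) b(1)] deg[OF w] by blast
    ultimately show "c \<in> iso_class ` {K \<in> matroids_on n. P K}"
      unfolding c by blast
  qed
qed

lemma factor_classes_disjoint:
  assumes w: "w \<in> W" "w' \<in> W" "w \<noteq> w'"
  shows "factor_classes n (deg w) (first_factors w) (second_factors w)
    \<inter> factor_classes n (deg w') (first_factors w') (second_factors w') = {}"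
proof (rule ccontr)
  assume "factor_classes n (deg w) (first_factors w) (second_factors w)
    \<inter> factor_classes n (deg w') (first_factors w') (second_factors w') \<noteq> {}"
  then obtain a b a' b' where a: "a \<in> irreducibles_on (deg w)" "PA w a"
    and b: "b \<in> matroids_on (n - deg w)" "PB w b"
    and a': "a' \<in> irreducibles_on (deg w')" "PA w' a'"
    and b': "b' \<in> matroids_on (n - deg w')" "PB w' b'"
    and "iso_class ({0..<n}, fp_concat n (deg w) (snd a) (snd b))
      = iso_class ({0..<n}, fp_concat n (deg w') (snd a') (snd b'))"
    unfolding factor_classes_def by fastforce
  then have "deg w = deg w'" "matroid_iso a a'" "matroid_iso b b'"
    using fp_concat_iso_iff[OF a(1) b(1) _ a'(1) b'(1)] deg[OF w(1)] deg[OF w(2)]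
    unfolding iso_class_eq_iff by blast+
  then have "PA w' a" "PB w' b"
    using PA_iso[OF w(2), of a a'] PB_iso[OF w(2), of b b'] a a' b b' by simp_all
  then show False
    using factors_unique[OF w(1,2) \<open>deg w = deg w'\<close> a(1) b(1) a(2) b(2)] w(3) by blast
qed

lemma card_iso_classes_sum:
  "card (iso_class ` {K \<in> matroids_on n. P K})
    = (\<Sum>w\<in>W. card (iso_class ` first_factors w) * card (iso_class ` second_factors w))"
proof -
  have "finite (factor_classes n (deg w) (first_factors w) (second_factors w))" for w
    unfolding factor_classes_def using finite_irreducibles_on finite_matroids_on by simp
  then have "card (\<Union>w\<in>W. factor_classes n (deg w) (first_factors w) (second_factors w))
      = (\<Sum>w\<in>W. card (factor_classes n (deg w) (first_factors w) (second_factors w)))"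
    using factor_classes_disjoint by (intro card_UN_disjoint[OF finite_W]) auto
  also have "\<dots> = (\<Sum>w\<in>W. card (iso_class ` first_factors w) * card (iso_class ` second_factors w))"
    using card_factor_classes deg by (intro sum.cong) auto
  finally show ?thesis
    unfolding iso_classes_eq_Union_factor_classes .
qed

end

lemma m_count_eq: "m_count n = card (iso_class ` matroids_on n)"
  unfolding m_count_def num_classes_eq by simp

lemma i_count_eq: "i_count n = card (iso_class ` irreducibles_on n)"
proof -
  have "{K \<in> matroids_on n. irreducible_matroid (fst K) (snd K)} = irreducibles_on n"
    unfolding matroids_on_def irreducibles_on_def using irreducible_imp_matroid by auto
  then show ?thesis
    unfolding i_count_def num_classes_eq by simp
qed

lemma m_count2_eq:
  "m_count2 r k = card (iso_class ` {K \<in> matroids_on (r + k). mrank (snd K) (fst K) = r})"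
  unfolding m_count2_def num_classes_eq by simp

lemma i_count2_eq:
  "i_count2 r k = card (iso_class ` {a \<in> irreducibles_on (r + k). mrank (snd a) (fst a) = r})"
proof -
  have "{K \<in> matroids_on (r + k). irreducible_matroid (fst K) (snd K) \<and> mrank (snd K) (fst K) = r}
      = {a \<in> irreducibles_on (r + k). mrank (snd a) (fst a) = r}"
    unfolding matroids_on_def irreducibles_on_def using irreducible_imp_matroid by auto
  then show ?thesis
    unfolding i_count2_def num_classes_eq by simp
qed

lemma matroids_on_0: "matroids_on 0 = {({}, {{}})}"
  unfolding matroids_on_def using matroid_empty_ground_iff by auto

lemma irreducibles_on_0: "irreducibles_on 0 = {}"
  unfolding irreducibles_on_def irreducible_matroid_def by auto

lemma m_count_0: "m_count 0 = 1"
  unfolding m_count_eq matroids_on_0 by simp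

lemma i_count_0: "i_count 0 = 0"
  unfolding i_count_eq irreducibles_on_0 by simp

lemma m_count2_0_0: "m_count2 0 0 = 1"
proof -
  have "mrank {{}} {} = 0"
    unfolding mrank_def by simp
  then have "{K \<in> matroids_on (0 + 0). mrank (snd K) (fst K) = 0} = {({}, {{}})}"
    using matroids_on_0 by auto
  then show ?thesis
    unfolding m_count2_eq by simp
qed

lemma i_count2_0_0: "i_count2 0 0 = 0"
  unfolding i_count2_eq using irreducibles_on_0 by simp

lemma rank_ground_iso:
  assumes "x \<in> matroids_on m" "y \<in> matroids_on m'" "matroid_iso x y"
  shows "mrank (snd x) (fst x) = mrank (snd y) (fst y)"
proof -
  obtain f where f: "iso_map f (fst x) (snd x) (fst y) (snd y)"
    using assms(3) matroid_iso_iff_iso_map[of "fst x" "snd x" "fst y" "snd y"] by auto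
  have "matroid (fst x) (snd x)" "matroid (fst y) (snd y)"
    using assms(1,2) unfolding mem_matroids_on by blast+
  moreover have "f ` fst x = fst y"
    using iso_map_bij[OF f] unfolding bij_betw_def by blast
  ultimately show ?thesis
    using rank_iso_map[OF _ _ f, of "fst x"] by simp
qed

lemma rank_ground_le: "x \<in> matroids_on m \<Longrightarrow> mrank (snd x) (fst x) \<le> m"
  unfolding mem_matroids_on using rank_le_card[of "fst x" "snd x" "fst x"] by auto

lemma rank_ground_fp_concat:
  assumes a: "a \<in> irreducibles_on j" and b: "b \<in> matroids_on (n - j)" and j: "j \<le> n"
  shows "mrank (fp_concat n j (snd a) (snd b)) {0..<n} = mrank (snd a) (fst a) + mrank (snd b) (fst b)"
proof -
  have "matroid {0..<j} (snd a)" "matroid {0..<n - j} (snd b)"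
    using a b irreducible_imp_matroid unfolding mem_irreducibles_on mem_matroids_on by auto
  then show ?thesis
    using rank_fp_concat[OF _ _ j] a b unfolding mem_irreducibles_on mem_matroids_on by simp
qed

lemma m_count_recurrence:
  assumes "0 < n"
  shows "m_count n = (\<Sum>k=1..n. i_count k * m_count (n - k))"
proof -
  interpret factor_decomposition n "\<lambda>_. True" "{1..n}" id "\<lambda>_ _. True" "\<lambda>_ _. True"
    by unfold_locales (use assms in auto)
  show ?thesis
    using card_iso_classes_sum unfolding m_count_eq i_count_eq by simp
qed

lemma factor_decomposition_rank:
  assumes "0 < r + k"
  shows "factor_decomposition (r + k) (\<lambda>K. mrank (snd K) (fst K) = r) ({0..r} \<times> {0..k} - {(0, 0)})
    (\<lambda>w. fst w + snd w) (\<lambda>(i, j) a. mrank (snd a) (fst a) = i) (\<lambda>(i, j) b. mrank (snd b) (fst b) = r - i)"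
    (is "factor_decomposition ?n ?P ?W ?deg ?PA ?PB")
proof unfold_locales
  show "0 < ?n" "finite ?W"
    using assms by simp_all
next
  fix w assume "w \<in> ?W"
  then show "1 \<le> fst w + snd w \<and> fst w + snd w \<le> ?n"
    by (cases w) auto
next
  fix x y assume "x \<in> matroids_on ?n" "y \<in> matroids_on ?n" "matroid_iso x y"
  then show "?P x \<longleftrightarrow> ?P y"
    using rank_ground_iso by metis
next
  fix w x y assume "x \<in> irreducibles_on (fst w + snd w)" "y \<in> irreducibles_on (fst w + snd w)"
    "matroid_iso x y"
  then have "mrank (snd x) (fst x) = mrank (snd y) (fst y)"
    using rank_ground_iso irreducibles_on_subset by blast
  then show "?PA w x \<longleftrightarrow> ?PA w y"
    by (simp add: case_prod_beta)
next
  fix w x y assume "x \<in> matroids_on (?n - (fst w + snd w))" "y \<in> matroids_on (?n - (fst w + snd w))"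
    "matroid_iso x y"
  then have "mrank (snd x) (fst x) = mrank (snd y) (fst y)"
    using rank_ground_iso by blast
  then show "?PB w x \<longleftrightarrow> ?PB w y"
    by (simp add: case_prod_beta)
next
  fix j a b assume j: "1 \<le> j" "j \<le> ?n" and a: "a \<in> irreducibles_on j" and b: "b \<in> matroids_on (?n - j)"
  let ?ra = "mrank (snd a) (fst a)"
  have "?ra \<le> j" "mrank (snd b) (fst b) \<le> ?n - j"
    using rank_ground_le a b irreducibles_on_subset by blast+
  then show "?P ({0..<?n}, fp_concat ?n j (snd a) (snd b)) \<longleftrightarrow>
      (\<exists>w\<in>?W. fst w + snd w = j \<and> ?PA w a \<and> ?PB w b)"
    using rank_ground_fp_concat[OF a b j(2)] j by (auto intro!: bexI[of _ "(?ra, j - ?ra)"])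
next
  fix w w' :: "nat \<times> nat" and a b
  assume "fst w + snd w = fst w' + snd w'" "?PA w a" "?PA w' a"
  then show "w = w'"
    by (simp add: case_prod_beta prod_eq_iff)
qed

lemma m_count2_recurrence:
  assumes "0 < r + k"
  shows "m_count2 r k = (\<Sum>(i, j)\<in>{0..r} \<times> {0..k} - {(0, 0)}. i_count2 i j * m_count2 (r - i) (k - j))"
proof -
  let ?n = "r + k" and ?W = "{0..r} \<times> {0..k} - {(0::nat, 0::nat)}"
  let ?P = "\<lambda>K. mrank (snd K) (fst K) = r"
  let ?PA = "\<lambda>(i, j) a. mrank (snd a) (fst a) = i"
  let ?PB = "\<lambda>(i, j) b. mrank (snd b) (fst b) = r - i"
  interpret factor_decomposition ?n ?P ?W "\<lambda>w. fst w + snd w" ?PA ?PB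
    using factor_decomposition_rank[OF assms] .
  have "card (iso_class ` {a \<in> irreducibles_on (fst w + snd w). ?PA w a})
      * card (iso_class ` {b \<in> matroids_on (?n - (fst w + snd w)). ?PB w b})
      = i_count2 (fst w) (snd w) * m_count2 (r - fst w) (k - snd w)" if "w \<in> ?W" for w
  proof -
    have "?n - (fst w + snd w) = (r - fst w) + (k - snd w)"
      using that by auto
    then show ?thesis
      unfolding i_count2_eq m_count2_eq by (simp add: case_prod_beta)
  qed
  then show ?thesis
    using card_iso_classes_sum unfolding m_count2_eq by (simp add: case_prod_beta)
qed

section \<open>Generating functions\<close>

unbundle fps_syntax

lemma fps_fps_inverse_unique:
  fixes f g :: "'a::field fps fps"
  assumes fg: "f * g = 1"
  shows "inverse f = g"
proof -
  have fg0: "f $ 0 * g $ 0 = 1"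
    using fg fps_mult_nth_0[of f g] by simp
  then have "inverse (f $ 0) = g $ 0"
    by (rule fps_inverse_unique)
  moreover have "fps_right_inverse f (g $ 0) = g"
    using fps_lr_inverse_unique_ring1(2)[OF fg] fg0 by (simp add: mult.commute)
  ultimately show ?thesis
    by (simp add: fps_inverse_def)
qed

lemma m_count_fps:
  "Abs_fps (\<lambda>n. of_nat (m_count n) :: rat) = inverse (1 - Abs_fps (\<lambda>n. of_nat (i_count n)))"
proof -
  define M where "M = Abs_fps (\<lambda>n. of_nat (m_count n) :: rat)"
  define I where "I = Abs_fps (\<lambda>n. of_nat (i_count n) :: rat)"
  have "(1 - I) * M = 1"
  proof (rule fps_ext)
    fix n
    have coeff: "((1 - I) * M) $ n = of_nat (m_count n) - (\<Sum>i=0..n. of_nat (i_count i) * of_nat (m_count (n - i)))"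
      by (simp add: left_diff_distrib fps_mult_nth M_def I_def)
    show "((1 - I) * M) $ n = 1 $ n"
    proof (cases "n = 0")
      case True
      then show ?thesis
        using coeff m_count_0 i_count_0 by simp
    next
      case False
      have "(\<Sum>i=0..n. of_nat (i_count i) * of_nat (m_count (n - i)) :: rat)
          = (\<Sum>i=1..n. of_nat (i_count i) * of_nat (m_count (n - i)))"
        using i_count_0 by (simp add: sum.atLeast_Suc_atMost)
      also have "\<dots> = of_nat (m_count n)"
        using m_count_recurrence[of n] False by simp
      finally show ?thesis
        using coeff False by simp
    qed
  qed
  then show ?thesis
    unfolding M_def I_def by (rule fps_inverse_unique[symmetric])
qed

lemma m_count2_fps: "biv m_count2 = inverse (1 - biv i_count2)"
proof -
  have "(1 - biv i_count2) * biv m_count2 = 1"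
  proof (intro fps_ext)
    fix r k
    have coeff: "((1 - biv i_count2) * biv m_count2) $ r $ k = of_nat (m_count2 r k)
        - (\<Sum>i=0..r. \<Sum>j=0..k. of_nat (i_count2 i j) * of_nat (m_count2 (r - i) (k - j)))"
      by (simp add: left_diff_distrib fps_mult_nth fps_sum_nth biv_def)
    show "((1 - biv i_count2) * biv m_count2) $ r $ k = 1 $ r $ k"
    proof (cases "r = 0 \<and> k = 0")
      case True
      then show ?thesis
        using coeff m_count2_0_0 i_count2_0_0 by simp
    next
      case False
      have "(\<Sum>i=0..r. \<Sum>j=0..k. of_nat (i_count2 i j) * of_nat (m_count2 (r - i) (k - j)) :: rat)
          = of_nat (\<Sum>(i, j)\<in>{0..r} \<times> {0..k}. i_count2 i j * m_count2 (r - i) (k - j))"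
        by (simp add: sum.cartesian_product case_prod_beta)
      also have "\<dots> = of_nat (\<Sum>(i, j)\<in>{0..r} \<times> {0..k} - {(0, 0)}. i_count2 i j * m_count2 (r - i) (k - j))"
        using i_count2_0_0 by (simp add: sum.remove[of _ "(0, 0)"])
      also have "\<dots> = of_nat (m_count2 r k)"
        using m_count2_recurrence[of r k] False by simp
      finally show ?thesis
        using coeff False by auto
    qed
  qed
  then show ?thesis
    by (rule fps_fps_inverse_unique[symmetric])
qed

theorem corollary6p19:
  shows "Abs_fps (\<lambda>n. of_nat (m_count n) :: rat) = inverse (1 - Abs_fps (\<lambda>n. of_nat (i_count n)))
       \<and> biv m_count2 = inverse (1 - biv i_count2)"
  using m_count_fps m_count2_fps by blast

end
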